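(* Let $D$ be a linear differential operator of order $k$, ${\bf z}\in\mathbb{R}^d$, ${\bf X}=\{{\bf x}_1,\dots,{\bf x}_N\}$, $\mu\ge0$, $q>k$, and let ${\bf w}={\bf w}^{1,\mu}$ be the weight vector of a $\|\cdot\|_{1,\mu}$-minimal formula of order $q$; assume ${\bf X}_{\bf w}\setminus\{{\bf z}\}\ne\emptyset$. Let $\Omega$ be a domain containing $S_{{\bf z},{\bf X}}$. Then for every $r\in\{k,\dots,q-1\}$, $\gamma\in(0,1]$ and $f\in C^{r,\gamma}(\Omega)$, $$\Big|Df({\bf z})-\sum_{j=1}^Nw_jf({\bf x}_j)\Big|\le\rho_{q,D}({\bf z},{\bf X},1,\mu)\,h_{{\bf z},{\bf X}_{\bf w}}^{\,r+\gamma-\mu}\,|f|_{r,\gamma,\Omega}\quad\text{if }0\le\mu\le r+\gamma,$$ $$\Big|Df({\bf z})-\sum_{j=1}^Nw_jf({\bf x}_j)\Big|\le\rho_{q,D}({\bf z},{\bf X},1,\mu)\,s_{{\bf z},{\bf X}_{\bf w}}^{\,r+\gamma-\mu}\,|f|_{r,\gamma,\Omega}\quad\text{if }\mu>r+\gamma.$$ In particular, for $\mu=r+\gamma$ the error is at most $\rho_{q,D}({\bf z},{\bf X},1,r+\gamma)\,|f|_{r,\gamma,\Omega}$.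
   Context: $\Pi^d_q$: real polynomials in $d$ variables of total degree $<q$. $Df=\sum_{|\alpha|\le k}c_\alpha\partial^\alpha f$, real coefficients, $\sum_{|\alpha|=k}|c_\alpha({\bf z})|\ne0$. ${\bf X}$ consists of distinct points; ${\bf w}$ is exact of order $q$ if $Dp({\bf z})=\sum_jw_jp({\bf x}_j)$ for all $p\in\Pi^d_q$. $\|{\bf w}\|_{1,\mu}:=\sum_j|w_j|\,\|{\bf x}_j-{\bf z}\|_2^\mu$ (convention $\|{\bf x}_j-{\bf z}\|_2^0:=1$); a $\|\cdot\|_{1,\mu}$-minimal formula of order $q$ is an exact-of-order-$q$ formula minimizing $\|{\bf w}\|_{1,\mu}$. $\rho_{q,D}({\bf z},{\bf X},1,\mu):=\inf\{\|{\bf w}\|_{1,\mu}:{\bf w}\text{ exact of order }q\}$ (equivalently $\sup\{Dp({\bf z}):p\in\Pi^d_q,\ |p({\bf x}_j)|\le\|{\bf x}_j-{\bf z}\|_2^\mu\ \forall j\}$). ${\bf X}_{\bf w}:=\{{\bf x}_j\in{\bf X}:w_j\ne0\}$; $h_{{\bf z},{\bf Y}}:=\max_{{\bf y}\in{\bf Y}}\|{\bf y}-{\bf z}\|_2$; $s_{{\bf z},{\bf Y}}:=\min_{{\bf y}\in{\bf Y}\setminus\{{\bf z}\}}\|{\bf y}-{\bf z}\|_2$. $S_{{\bf z},{\bf X}}:=\bigcup_i[{\bf z},{\bf x}_i]$. A domain is an open connected set. $|g|_{\gamma,\Omega}:=\sup_{{\bf x}\ne{\bf y}\in\Omega}|g({\bf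 x})-g({\bf y})|/\|{\bf x}-{\bf y}\|_2^\gamma$; $C^{r,\gamma}(\Omega)$: $r$ times continuously differentiable $f$ with $|\partial^\alpha f|_{\gamma,\Omega}<\infty$ for $|\alpha|=r$; $|f|_{r,\gamma,\Omega}:=\frac{1}{(\gamma+1)\cdots(\gamma+r)}\big(\sum_{|\alpha|=r}\frac{r!}{\alpha!}|\partial^\alpha f|_{\gamma,\Omega}^2\big)^{1/2}$. *)

theory Defs
  imports "HOL-Analysis.Analysis"
begin

text \<open>Points of R^d are vectors of type real ^ 'n (d = CARD('n)).
  Multi-indices are functions 'n \<Rightarrow> nat.\<close>

definition mi_abs :: "('n::finite \<Rightarrow> nat) \<Rightarrow> nat" where
  "mi_abs \<alpha> = (\<Sum>i\<in>UNIV. \<alpha> i)"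

definition mi_fact :: "('n::finite \<Rightarrow> nat) \<Rightarrow> nat" where
  "mi_fact \<alpha> = (\<Prod>i\<in>UNIV. fact (\<alpha> i))"

definition mi_le :: "nat \<Rightarrow> ('n::finite \<Rightarrow> nat) set" where
  "mi_le m = {\<alpha>. mi_abs \<alpha> \<le> m}"

definition mi_eq :: "nat \<Rightarrow> ('n::finite \<Rightarrow> nat) set" where
  "mi_eq m = {\<alpha>. mi_abs \<alpha> = m}"

definition partial :: "'n::finite \<Rightarrow> (real ^ 'n \<Rightarrow> real) \<Rightarrow> real ^ 'n \<Rightarrow> real" where
  "partial i f x = deriv (\<lambda>t. f (x + t *\<^sub>R axis i 1)) 0"

fun iter_partial :: "'n::finite list \<Rightarrow> (real ^ 'n \<Rightarrow> real) \<Rightarrow> real ^ 'n \<Rightarrow> real" where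
  "iter_partial [] f = f"
| "iter_partial (i # is) f = partial i (iter_partial is f)"

definition coord_list :: "'n::finite list" where
  "coord_list = (SOME l. distinct l \<and> set l = UNIV)"

definition mpartial :: "('n::finite \<Rightarrow> nat) \<Rightarrow> (real ^ 'n \<Rightarrow> real) \<Rightarrow> real ^ 'n \<Rightarrow> real" where
  "mpartial \<alpha> f = foldr (\<lambda>i g. (partial i ^^ \<alpha> i) g) coord_list f"

definition Cr_on :: "nat \<Rightarrow> (real ^ 'n::finite) set \<Rightarrow> (real ^ 'n \<Rightarrow> real) \<Rightarrow> bool" where
  "Cr_on r \<Omega> f \<longleftrightarrow>
     (\<forall>is. length is \<le> r \<longrightarrow> continuous_on \<Omega> (iter_partial is f)) \<and>
     (\<forall>is i. length is < r \<longrightarrow>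
        (\<forall>x\<in>\<Omega>. (\<lambda>t::real. iter_partial is f (x + t *\<^sub>R axis i 1)) differentiable (at 0)))"

definition holder_quots :: "real \<Rightarrow> (real ^ 'n::finite) set \<Rightarrow> (real ^ 'n \<Rightarrow> real) \<Rightarrow> real set" where
  "holder_quots \<gamma> \<Omega> g =
     {\<bar>g x - g y\<bar> / norm (x - y) powr \<gamma> | x y. x \<in> \<Omega> \<and> y \<in> \<Omega> \<and> x \<noteq> y}"

definition holder_semi :: "real \<Rightarrow> (real ^ 'n::finite) set \<Rightarrow> (real ^ 'n \<Rightarrow> real) \<Rightarrow> real" where
  "holder_semi \<gamma> \<Omega> g = Sup (holder_quots \<gamma> \<Omega> g)"

definition Crgamma_on :: "nat \<Rightarrow> real \<Rightarrow> (real ^ 'n::finite) set \<Rightarrow> (real ^ 'n \<Rightarrow> real) \<Rightarrow> bool" where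
  "Crgamma_on r \<gamma> \<Omega> f \<longleftrightarrow> Cr_on r \<Omega> f \<and>
     (\<forall>\<alpha>\<in>mi_eq r. bdd_above (holder_quots \<gamma> \<Omega> (mpartial \<alpha> f)))"

definition holder_norm :: "nat \<Rightarrow> real \<Rightarrow> (real ^ 'n::finite) set \<Rightarrow> (real ^ 'n \<Rightarrow> real) \<Rightarrow> real" where
  "holder_norm r \<gamma> \<Omega> f =
     (1 / (\<Prod>i=1..r. \<gamma> + real i)) *
     sqrt (\<Sum>\<alpha>\<in>mi_eq r. (fact r / real (mi_fact \<alpha>)) * (holder_semi \<gamma> \<Omega> (mpartial \<alpha> f))\<^sup>2)"

definition poly_space :: "nat \<Rightarrow> (real ^ 'n::finite \<Rightarrow> real) set" where
  "poly_space q = {p. \<exists>c::('n \<Rightarrow> nat) \<Rightarrow> real.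
      p = (\<lambda>x. \<Sum>\<alpha>\<in>{\<alpha>. mi_abs \<alpha> < q}. c \<alpha> * (\<Prod>i\<in>UNIV. (x $ i) ^ \<alpha> i))}"

text \<open>The linear differential operator D = sum_{|alpha| <= k} c_alpha partial^alpha,
  evaluated at z; c alpha stands for the coefficient value c_alpha(z).\<close>
definition diff_op_at :: "nat \<Rightarrow> (('n::finite \<Rightarrow> nat) \<Rightarrow> real) \<Rightarrow> (real ^ 'n \<Rightarrow> real) \<Rightarrow> real ^ 'n \<Rightarrow> real" where
  "diff_op_at k c f z = (\<Sum>\<alpha>\<in>mi_le k. c \<alpha> * mpartial \<alpha> f z)"

definition diff_op_order :: "nat \<Rightarrow> (('n::finite \<Rightarrow> nat) \<Rightarrow> real) \<Rightarrow> bool" where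
  "diff_op_order k c \<longleftrightarrow> (\<Sum>\<alpha>\<in>mi_eq k. \<bar>c \<alpha>\<bar>) \<noteq> 0"

definition exact_formula :: "nat \<Rightarrow> (('n::finite \<Rightarrow> nat) \<Rightarrow> real) \<Rightarrow> real ^ 'n \<Rightarrow> (real ^ 'n) set \<Rightarrow> nat \<Rightarrow> (real ^ 'n \<Rightarrow> real) \<Rightarrow> bool" where
  "exact_formula k c z X q w \<longleftrightarrow>
     (\<forall>p\<in>poly_space q. diff_op_at k c p z = (\<Sum>x\<in>X. w x * p x))"

text \<open>t^mu with the convention t^0 = 1.\<close>
definition mu_pow :: "real \<Rightarrow> real \<Rightarrow> real" where
  "mu_pow \<mu> t = (if \<mu> = 0 then 1 else t powr \<mu>)"

definition wnorm_1mu :: "real \<Rightarrow> real ^ 'n::finite \<Rightarrow> (real ^ 'n) set \<Rightarrow> (real ^ 'n \<Rightarrow> real) \<Rightarrow> real" where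
  "wnorm_1mu \<mu> z X w = (\<Sum>x\<in>X. \<bar>w x\<bar> * mu_pow \<mu> (norm (x - z)))"

definition minimal_formula :: "nat \<Rightarrow> (('n::finite \<Rightarrow> nat) \<Rightarrow> real) \<Rightarrow> real ^ 'n \<Rightarrow> (real ^ 'n) set \<Rightarrow> nat \<Rightarrow> real \<Rightarrow> (real ^ 'n \<Rightarrow> real) \<Rightarrow> bool" where
  "minimal_formula k c z X q \<mu> w \<longleftrightarrow> exact_formula k c z X q w \<and>
     (\<forall>w'. exact_formula k c z X q w' \<longrightarrow> wnorm_1mu \<mu> z X w \<le> wnorm_1mu \<mu> z X w')"

definition rho :: "nat \<Rightarrow> (('n::finite \<Rightarrow> nat) \<Rightarrow> real) \<Rightarrow> real ^ 'n \<Rightarrow> (real ^ 'n) set \<Rightarrow> nat \<Rightarrow> real \<Rightarrow> real" where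
  "rho k c z X q \<mu> = Inf {wnorm_1mu \<mu> z X w | w. exact_formula k c z X q w}"

definition support_pts :: "(real ^ 'n::finite) set \<Rightarrow> (real ^ 'n \<Rightarrow> real) \<Rightarrow> (real ^ 'n) set" where
  "support_pts X w = {x\<in>X. w x \<noteq> 0}"

definition h_zY :: "real ^ 'n::finite \<Rightarrow> (real ^ 'n) set \<Rightarrow> real" where
  "h_zY z Y = Max ((\<lambda>y. norm (y - z)) ` Y)"

definition s_zY :: "real ^ 'n::finite \<Rightarrow> (real ^ 'n) set \<Rightarrow> real" where
  "s_zY z Y = Min ((\<lambda>y. norm (y - z)) ` (Y - {z}))"

definition star_S :: "real ^ 'n::finite \<Rightarrow> (real ^ 'n) set \<Rightarrow> (real ^ 'n) set" where
  "star_S z X = (\<Union>x\<in>X. closed_segment z x)"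

end

theory Submission
  imports Defs
begin

text \<open>
  Let T be the Taylor polynomial of f of degree r at z. As r < q it is a polynomial of degree
  less than q, and as k \<le> r it has the same derivatives of order \<le> k at z as f, so exactness
  of w on T turns the error into the sum of w(x) (T x - f x) over x \<in> X. Along the segment from
  z to x, the r-th derivative of t \<mapsto> f (z + t (x - z)) is the sum over |\<alpha>| = r of
  r!/\<alpha>! (x - z)^\<alpha> \<partial>^\<alpha> f. Cauchy-Schwarz against the multinomial weights r!/\<alpha>!, for which
  the weighted sum of the squared monomials is \<parallel>x - z\<parallel>^(2r), shows that this derivative is
  \<gamma>-Hoelder in t with the constant appearing in the seminorm |f|_{r,\<gamma>}; integrating r times
  yields the factor 1/((\<gamma>+1)\<dots>(\<gamma>+r)), hence |f x - T x| \<le> |f|_{r,\<gamma>} \<parallel>x - z\<parallel>^(r+\<gamma>).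
  Splitting this power as \<parallel>x - z\<parallel>^\<mu> \<parallel>x - z\<parallel>^(r+\<gamma>-\<mu>) and bounding the second factor on the
  support of w by the corresponding power of h or s, the first factors sum to \<rho> by minimality.
\<close>

section \<open>Taylor's formula in one variable with a Hoelder remainder\<close>

lemma deriv_bound_powr_signed:
  fixes R R' :: "real \<Rightarrow> real"
  assumes der: "\<forall>t\<in>{0..1}. (R has_real_derivative R' t) (at t)" and R0: "R 0 = 0"
    and bd: "\<forall>t\<in>{0..1}. \<bar>R' t\<bar> \<le> K * t powr a" and a: "a \<ge> 0"
    and sg: "\<bar>\<sigma>\<bar> = 1" and t: "0 < t" "t \<le> 1"
  shows "\<sigma> * R t \<le> K * t powr (a+1) / (a+1)"
proof -
  define \<psi> where "\<psi> s = (K / (a+1)) * s powr (a+1) - \<sigma> * R s" for s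
  have cR: "continuous_on {0..t} R"
    using der t by (intro continuous_at_imp_continuous_on) (auto intro: DERIV_isCont)
  have "continuous_on {0..t} (\<lambda>s. s powr (a+1))"
    using a by (intro continuous_on_powr') (auto intro: continuous_intros)
  hence c\<psi>: "continuous_on {0..t} \<psi>" unfolding \<psi>_def using cR by (intro continuous_on_diff continuous_on_mult_left) auto
  have d\<psi>: "(\<psi> has_real_derivative K * s powr a - \<sigma> * R' s) (at s)" if "0 < s" "s \<le> 1" for s
  proof -
    have "((\<lambda>s. s powr (a+1)) has_real_derivative (a+1) * s powr (a+1-1)) (at s)"
      using that by (intro has_real_derivative_powr) auto
    moreover have "(R has_real_derivative R' s) (at s)" using der that by auto
    ultimately have "(\<psi> has_real_derivative (K / (a+1)) * ((a+1) * s powr (a+1-1)) - \<sigma> * R' s) (at s)"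
      unfolding \<psi>_def by (intro DERIV_diff DERIV_cmult) auto
    thus ?thesis using a by simp
  qed
  obtain l s where s: "0 < s" "s < t" and ds: "DERIV \<psi> s :> l" and eq: "\<psi> t - \<psi> 0 = (t - 0) * l"
    using MVT[OF t(1) c\<psi>] d\<psi> t by (meson less_eq_real_def order_less_le_trans real_differentiable_def)
  have "l = K * s powr a - \<sigma> * R' s" using DERIV_unique[OF ds d\<psi>] s t by auto
  moreover have "\<bar>\<sigma> * R' s\<bar> \<le> K * s powr a" using bd s t sg by (auto simp: abs_mult)
  ultimately have "l \<ge> 0" by auto
  hence "\<psi> t \<ge> \<psi> 0" using eq t by (smt (verit) mult_nonneg_nonneg)
  moreover have "\<psi> 0 = 0" unfolding \<psi>_def using R0 a by simp
  ultimately have "(K / (a+1)) * t powr (a+1) - \<sigma> * R t \<ge> 0" unfolding \<psi>_def using R0 by simp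
  thus ?thesis by simp
qed

lemma deriv_bound_powr_integrate:
  fixes R R' :: "real \<Rightarrow> real"
  assumes der: "\<forall>t\<in>{0..1}. (R has_real_derivative R' t) (at t)" and R0: "R 0 = 0"
    and bd: "\<forall>t\<in>{0..1}. \<bar>R' t\<bar> \<le> K * t powr a" and a: "a \<ge> 0"
  shows "\<forall>t\<in>{0..1}. \<bar>R t\<bar> \<le> K * t powr (a+1) / (a+1)"
proof
  fix t :: real assume t: "t \<in> {0..1}"
  show "\<bar>R t\<bar> \<le> K * t powr (a+1) / (a+1)"
  proof (cases "t = 0")
    case True thus ?thesis using R0 by simp
  next
    case False
    hence "0 < t" "t \<le> 1" using t by auto
    from deriv_bound_powr_signed[OF der R0 bd a _ this, of 1] deriv_bound_powr_signed[OF der R0 bd a _ this, of "-1"]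
    show ?thesis by auto
  qed
qed

lemma sum_powers_deriv_shift:
  fixes c :: "nat \<Rightarrow> real"
  shows "(\<Sum>l\<le>Suc j. c l * (real l * t ^ (l - 1)) / fact l) = (\<Sum>l\<le>j. c (Suc l) * t ^ l / fact l)"
proof -
  have "c (Suc l) * (real (Suc l) * t ^ l) / fact (Suc l) = c (Suc l) * t ^ l / fact l" for l
  proof -
    have "fact (Suc l) = real (Suc l) * (fact l :: real)" by (simp only: fact_Suc of_nat_mult)
    moreover have "real (Suc l) \<noteq> 0" "(fact l :: real) \<noteq> 0" by auto
    moreover have "\<And>a b x y::real. a \<noteq> 0 \<Longrightarrow> b \<noteq> 0 \<Longrightarrow> y * (a * x) / (a * b) = y * x / b" by simp
    ultimately show ?thesis by metis
  qed
  thus ?thesis by (subst sum.atMost_Suc_shift) simp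
qed

lemma sum_powers_at_zero:
  fixes c :: "nat \<Rightarrow> real"
  shows "(\<Sum>l\<le>j. c l * 0 ^ l / fact l) = c 0"
  by (induction j) auto

lemma taylor_holder_remainder_1d_on:
  fixes G :: "nat \<Rightarrow> real \<Rightarrow> real"
  assumes der: "\<forall>j<n. \<forall>t\<in>{0..1}. (G j has_real_derivative G (Suc j) t) (at t)"
    and hol: "\<forall>t\<in>{0..1}. \<bar>G n t - G n 0\<bar> \<le> L * t powr \<gamma>" and \<gamma>: "\<gamma> > 0"
    and j: "j \<le> n"
  shows "\<forall>t\<in>{0..1}. \<bar>G (n-j) t - (\<Sum>l\<le>j. G (n-j+l) 0 * t^l / fact l)\<bar>
      \<le> L * t powr (\<gamma> + real j) / (\<Prod>i=1..j. \<gamma> + real i)"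
  using j
proof (induction j)
  case 0
  then show ?case using hol by simp
next
  case (Suc j)
  define m where "m = n - Suc j"
  have nj: "n - j = Suc m" using Suc.prems unfolding m_def by simp
  have mn: "m < n" using Suc.prems unfolding m_def by simp
  define R where "R t = G m t - (\<Sum>l\<le>Suc j. G (m+l) 0 * t^l / fact l)" for t
  define R' where "R' t = G (Suc m) t - (\<Sum>l\<le>j. G (Suc m+l) 0 * t^l / fact l)" for t
  have dR: "\<forall>t\<in>{0..1}. (R has_real_derivative R' t) (at t)"
  proof
    fix t :: real assume t: "t \<in> {0..1}"
    have gm: "(G m has_real_derivative G (Suc m) t) (at t)" using der mn t by auto
    have "(R has_real_derivative G (Suc m) t - (\<Sum>l\<le>Suc j. G (m+l) 0 * (real l * t ^ (l - 1)) / fact l)) (at t)"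
      unfolding R_def
      by (intro DERIV_diff gm DERIV_sum DERIV_cdivide DERIV_cmult) (use DERIV_pow in auto)
    thus "(R has_real_derivative R' t) (at t)"
      unfolding R'_def sum_powers_deriv_shift by simp
  qed
  have R0: "R 0 = 0" unfolding R_def using sum_powers_at_zero[of "\<lambda>l. G (m+l) 0"] by simp
  have IH: "\<forall>t\<in>{0..1}. \<bar>R' t\<bar> \<le> (L / (\<Prod>i=1..j. \<gamma> + real i)) * t powr (\<gamma> + real j)"
    using Suc.IH Suc.prems unfolding R'_def nj by simp
  have "\<forall>t\<in>{0..1}. \<bar>R t\<bar> \<le> (L / (\<Prod>i=1..j. \<gamma> + real i)) * t powr (\<gamma> + real j + 1) / (\<gamma> + real j + 1)"
    by (rule deriv_bound_powr_integrate[OF dR R0 IH]) (use \<gamma> in auto)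
  moreover have "(\<Prod>i=1..Suc j. \<gamma> + real i) = (\<Prod>i=1..j. \<gamma> + real i) * (\<gamma> + real j + 1)"
    by (simp add: prod.nat_ivl_Suc' algebra_simps)
  ultimately show ?case unfolding R_def m_def[symmetric] by (simp add: algebra_simps)
qed

lemma taylor_holder_remainder_1d:
  fixes G :: "nat \<Rightarrow> real \<Rightarrow> real"
  assumes der: "\<forall>j<n. \<forall>t\<in>{0..1}. (G j has_real_derivative G (Suc j) t) (at t)"
    and hol: "\<forall>t\<in>{0..1}. \<bar>G n t - G n 0\<bar> \<le> L * t powr \<gamma>" and \<gamma>: "\<gamma> > 0"
  shows "\<bar>G 0 1 - (\<Sum>m\<le>n. G m 0 / fact m)\<bar> \<le> L / (\<Prod>i=1..n. \<gamma> + real i)"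
  using bspec[OF taylor_holder_remainder_1d_on[OF der hol \<gamma> order.refl], of 1] by simp

section \<open>Multi-indices and the multinomial theorem\<close>

definition mi_inc :: "('n \<Rightarrow> nat) \<Rightarrow> 'n \<Rightarrow> ('n \<Rightarrow> nat)" where
  "mi_inc \<alpha> i = \<alpha>(i := Suc (\<alpha> i))"

lemma finite_mi_le: "finite (mi_le m :: ('n::finite \<Rightarrow> nat) set)"
proof -
  have "mi_le m \<subseteq> (Pi\<^sub>E UNIV (\<lambda>_. {..m}) :: ('n \<Rightarrow> nat) set)"
  proof
    fix \<alpha> :: "'n \<Rightarrow> nat" assume "\<alpha> \<in> mi_le m"
    hence "\<alpha> i \<le> m" for i unfolding mi_le_def mi_abs_def
      using member_le_sum[of i UNIV \<alpha>] by auto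
    thus "\<alpha> \<in> Pi\<^sub>E UNIV (\<lambda>_. {..m})" by (auto simp: PiE_UNIV_domain)
  qed
  moreover have "finite (Pi\<^sub>E UNIV (\<lambda>_. {..m}) :: ('n \<Rightarrow> nat) set)" by (intro finite_PiE) auto
  ultimately show ?thesis by (rule finite_subset)
qed

lemma finite_mi_eq: "finite (mi_eq m :: ('n::finite \<Rightarrow> nat) set)"
  by (rule finite_subset[OF _ finite_mi_le[of m]]) (auto simp: mi_eq_def mi_le_def)

lemma sum_UNIV_fun_upd:
  fixes \<alpha> :: "'n::finite \<Rightarrow> 'b::comm_monoid_add"
  shows "(\<Sum>j\<in>UNIV. (\<alpha>(i := v)) j) = v + (\<Sum>j\<in>UNIV-{i}. \<alpha> j)"
  by (subst sum.remove[of UNIV i]) (auto intro!: sum.cong)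

lemma prod_UNIV_fun_upd:
  fixes \<alpha> :: "'n::finite \<Rightarrow> 'b::comm_monoid_mult"
  shows "(\<Prod>j\<in>UNIV. (\<alpha>(i := v)) j) = v * (\<Prod>j\<in>UNIV-{i}. \<alpha> j)"
  by (subst prod.remove[of UNIV i]) (auto intro!: prod.cong)

lemma mi_abs_mi_inc: "mi_abs (mi_inc \<alpha> i) = Suc (mi_abs (\<alpha>::'n::finite \<Rightarrow> nat))"
  unfolding mi_abs_def mi_inc_def
  using sum_UNIV_fun_upd[of \<alpha> i "Suc (\<alpha> i)"] sum.remove[of UNIV i \<alpha>] by simp

lemma mi_fact_mi_inc: "mi_fact (mi_inc \<alpha> i) = mi_fact (\<alpha>::'n::finite \<Rightarrow> nat) * Suc (\<alpha> i)"
proof -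
  have "mi_fact (mi_inc \<alpha> i) = (\<Prod>j\<in>UNIV. ((\<lambda>j. fact (\<alpha> j)) (i := fact (Suc (\<alpha> i)))) j)"
    unfolding mi_fact_def mi_inc_def by (intro prod.cong) auto
  also have "\<dots> = fact (Suc (\<alpha> i)) * (\<Prod>j\<in>UNIV-{i}. fact (\<alpha> j))" by (rule prod_UNIV_fun_upd)
  also have "\<dots> = (fact (\<alpha> i) * (\<Prod>j\<in>UNIV-{i}. fact (\<alpha> j))) * Suc (\<alpha> i)"
    by (simp only: fact_Suc of_nat_id mult_ac)
  also have "\<dots> = mi_fact \<alpha> * Suc (\<alpha> i)"
  proof -
    have "mi_fact \<alpha> = fact (\<alpha> i) * (\<Prod>j\<in>UNIV-{i}. fact (\<alpha> j))"
      unfolding mi_fact_def by (rule prod.remove) auto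
    thus ?thesis by (simp only:)
  qed
  finally show ?thesis .
qed

lemma mi_fact_pos: "mi_fact \<alpha> > 0"
  unfolding mi_fact_def by (auto intro: prod_pos)

lemma mi_eq_Suc_pos_eq_image:
  "{\<beta>\<in>mi_eq (Suc m). \<beta> i > 0} = (\<lambda>\<alpha>. mi_inc \<alpha> i) ` (mi_eq m :: ('n::finite \<Rightarrow> nat) set)"
proof (intro equalityI subsetI)
  fix \<beta> :: "'n \<Rightarrow> nat" assume b: "\<beta> \<in> {\<beta>\<in>mi_eq (Suc m). \<beta> i > 0}"
  define \<alpha> where "\<alpha> = \<beta>(i := \<beta> i - 1)"
  have "mi_inc \<alpha> i = \<beta>" using b unfolding \<alpha>_def mi_inc_def by auto
  moreover have "\<alpha> \<in> mi_eq m" using mi_abs_mi_inc[of \<alpha> i] b \<open>mi_inc \<alpha> i = \<beta>\<close> by (simp add: mi_eq_def)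
  ultimately show "\<beta> \<in> (\<lambda>\<alpha>. mi_inc \<alpha> i) ` mi_eq m" by blast
next
  fix \<beta> :: "'n \<Rightarrow> nat" assume "\<beta> \<in> (\<lambda>\<alpha>. mi_inc \<alpha> i) ` mi_eq m"
  then obtain \<alpha> where "\<alpha> \<in> mi_eq m" "\<beta> = mi_inc \<alpha> i" by blast
  moreover have "mi_inc \<alpha> i \<in> mi_eq (Suc m)" using \<open>\<alpha> \<in> mi_eq m\<close> by (simp add: mi_eq_def mi_abs_mi_inc)
  moreover have "mi_inc \<alpha> i i > 0" by (simp add: mi_inc_def)
  ultimately show "\<beta> \<in> {\<beta>\<in>mi_eq (Suc m). \<beta> i > 0}" by simp
qed

lemma inj_mi_inc: "inj (\<lambda>\<alpha>. mi_inc \<alpha> i)"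
proof (rule injI)
  fix a b :: "'a \<Rightarrow> nat" assume "mi_inc a i = mi_inc b i"
  note eq = this
  have "a j = b j" for j using fun_cong[OF eq, of j] by (cases "j = i") (auto simp: mi_inc_def)
  thus "a = b" by (rule ext)
qed

lemma sum_mi_eq_mi_inc_coord:
  fixes F :: "('n::finite \<Rightarrow> nat) \<Rightarrow> real"
  shows "(\<Sum>\<alpha>\<in>mi_eq m. (fact m / real (mi_fact \<alpha>)) * F (mi_inc \<alpha> i))
      = (\<Sum>\<beta>\<in>mi_eq (Suc m). (fact m * real (\<beta> i) / real (mi_fact \<beta>)) * F \<beta>)"
proof -
  let ?g = "\<lambda>\<beta>. (fact m * real (\<beta> i) / real (mi_fact \<beta>)) * F \<beta>"
  have "(\<Sum>\<beta>\<in>mi_eq (Suc m). ?g \<beta>) = (\<Sum>\<beta>\<in>{\<beta>\<in>mi_eq (Suc m). \<beta> i > 0}. ?g \<beta>)"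
    by (rule sum.mono_neutral_right) (auto simp: finite_mi_eq)
  also have "\<dots> = (\<Sum>\<alpha>\<in>mi_eq m. ?g (mi_inc \<alpha> i))"
    unfolding mi_eq_Suc_pos_eq_image by (subst sum.reindex) (auto intro: inj_on_subset[OF inj_mi_inc])
  also have "\<dots> = (\<Sum>\<alpha>\<in>mi_eq m. (fact m / real (mi_fact \<alpha>)) * F (mi_inc \<alpha> i))"
  proof (intro sum.cong refl)
    fix \<alpha> :: "'n \<Rightarrow> nat"
    have h: "\<And>c x y G::real. x \<noteq> 0 \<Longrightarrow> c * x / (y * x) * G = c / y * G" by simp
    have "real (mi_inc \<alpha> i i) = real (Suc (\<alpha> i))" by (simp add: mi_inc_def)
    moreover have "real (Suc (\<alpha> i)) \<noteq> 0" by (simp del: of_nat_Suc)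
    ultimately show "?g (mi_inc \<alpha> i) = (fact m / real (mi_fact \<alpha>)) * F (mi_inc \<alpha> i)"
      unfolding mi_fact_mi_inc of_nat_mult by (metis h)
  qed
  finally show ?thesis by simp
qed

lemma sum_mi_eq_mi_inc:
  fixes F :: "('n::finite \<Rightarrow> nat) \<Rightarrow> real"
  shows "(\<Sum>\<alpha>\<in>mi_eq m. (fact m / real (mi_fact \<alpha>)) * (\<Sum>i\<in>UNIV. F (mi_inc \<alpha> i)))
       = (\<Sum>\<beta>\<in>mi_eq (Suc m). (fact (Suc m) / real (mi_fact \<beta>)) * F \<beta>)"
proof -
  have "(\<Sum>\<alpha>\<in>mi_eq m. (fact m / real (mi_fact \<alpha>)) * (\<Sum>i\<in>UNIV. F (mi_inc \<alpha> i)))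
      = (\<Sum>i\<in>UNIV. \<Sum>\<alpha>\<in>mi_eq m. (fact m / real (mi_fact \<alpha>)) * F (mi_inc \<alpha> i))"
    by (subst sum.swap) (simp add: sum_distrib_left)
  also have "\<dots> = (\<Sum>i\<in>UNIV. \<Sum>\<beta>\<in>mi_eq (Suc m). (fact m * real (\<beta> i) / real (mi_fact \<beta>)) * F \<beta>)"
    by (simp only: sum_mi_eq_mi_inc_coord)
  also have "\<dots> = (\<Sum>\<beta>\<in>mi_eq (Suc m). (fact m / real (mi_fact \<beta>)) * F \<beta> * (\<Sum>i\<in>UNIV. real (\<beta> i)))"
    by (subst sum.swap) (simp add: sum_distrib_left sum_divide_distrib mult_ac)
  also have "\<dots> = (\<Sum>\<beta>\<in>mi_eq (Suc m). (fact (Suc m) / real (mi_fact \<beta>)) * F \<beta>)"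
  proof (intro sum.cong refl)
    fix \<beta> :: "'n \<Rightarrow> nat" assume "\<beta> \<in> mi_eq (Suc m)"
    hence "(\<Sum>i\<in>UNIV. real (\<beta> i)) = real (Suc m)"
      unfolding mi_eq_def mi_abs_def by (simp flip: of_nat_sum)
    thus "(fact m / real (mi_fact \<beta>)) * F \<beta> * (\<Sum>i\<in>UNIV. real (\<beta> i)) = (fact (Suc m) / real (mi_fact \<beta>)) * F \<beta>"
      by (simp only: fact_Suc of_nat_mult) (simp add: mult_ac)
  qed
  finally show ?thesis .
qed

definition mono_pow :: "(real ^ 'n) \<Rightarrow> ('n::finite \<Rightarrow> nat) \<Rightarrow> real" where
  "mono_pow h \<alpha> = (\<Prod>i\<in>UNIV. (h $ i) ^ \<alpha> i)"

lemma mono_pow_mi_inc: "mono_pow h (mi_inc \<alpha> i) = h $ i * mono_pow h \<alpha>"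
proof -
  have "mono_pow h (mi_inc \<alpha> i) = (\<Prod>j\<in>UNIV. ((\<lambda>j. (h $ j) ^ \<alpha> j)(i := (h$i) ^ Suc (\<alpha> i))) j)"
    unfolding mono_pow_def mi_inc_def by (intro prod.cong) auto
  also have "\<dots> = (h$i) ^ Suc (\<alpha> i) * (\<Prod>j\<in>UNIV-{i}. (h $ j) ^ \<alpha> j)" by (rule prod_UNIV_fun_upd)
  also have "\<dots> = h $ i * mono_pow h \<alpha>"
    unfolding mono_pow_def using prod.remove[of UNIV i "\<lambda>j. (h $ j) ^ \<alpha> j"] by (simp add: algebra_simps)
  finally show ?thesis .
qed

lemma mi_eq_0: "mi_eq 0 = {(\<lambda>_. 0) :: 'n::finite \<Rightarrow> nat}"
proof -
  have "(\<Sum>i\<in>UNIV. \<alpha> i) = 0 \<longleftrightarrow> \<alpha> = (\<lambda>_. 0)" for \<alpha> :: "'n \<Rightarrow> nat" by (simp add: fun_eq_iff)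
  thus ?thesis unfolding mi_eq_def mi_abs_def by auto
qed

lemma multinomial_theorem:
  fixes h :: "real ^ 'n::finite"
  shows "(\<Sum>i\<in>UNIV. h $ i) ^ m = (\<Sum>\<alpha>\<in>mi_eq m. (fact m / real (mi_fact \<alpha>)) * mono_pow h \<alpha>)"
proof (induction m)
  case 0
  then show ?case by (simp add: mi_eq_0 mi_fact_def mono_pow_def)
next
  case (Suc m)
  have "(\<Sum>i\<in>UNIV. h $ i) ^ Suc m = (\<Sum>\<alpha>\<in>mi_eq m. (fact m / real (mi_fact \<alpha>)) * mono_pow h \<alpha>) * (\<Sum>i\<in>UNIV. h $ i)"
    using Suc by (simp add: mult.commute)
  also have "\<dots> = (\<Sum>\<alpha>\<in>mi_eq m. (fact m / real (mi_fact \<alpha>)) * (\<Sum>i\<in>UNIV. mono_pow h (mi_inc \<alpha> i)))"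
  proof -
    have "\<And>\<alpha>. (\<Sum>i\<in>UNIV. mono_pow h (mi_inc \<alpha> i)) = mono_pow h \<alpha> * (\<Sum>i\<in>UNIV. h $ i)"
      by (simp add: mono_pow_mi_inc sum_distrib_left mult.commute)
    thus ?thesis by (simp add: sum_distrib_right mult.assoc)
  qed
  also have "\<dots> = (\<Sum>\<beta>\<in>mi_eq (Suc m). (fact (Suc m) / real (mi_fact \<beta>)) * mono_pow h \<beta>)" by (rule sum_mi_eq_mi_inc)
  finally show ?case .
qed

section \<open>Continuous partial derivatives\<close>

lemma iter_partial_append: "iter_partial (a @ b) F = iter_partial a (iter_partial b F)"
  by (induction a) auto

lemma Cr_on_iter_partial:
  assumes "Cr_on m \<Omega> F" "length L \<le> m"
  shows "Cr_on (m - length L) \<Omega> (iter_partial L F)"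
  using assms unfolding Cr_on_def
  by (auto simp flip: iter_partial_append)

lemma continuous_on_partial_Cr:
  assumes "Cr_on m \<Omega> F" "m \<ge> 1"
  shows "continuous_on \<Omega> (partial i F)"
proof -
  have c: "\<forall>is. length is \<le> m \<longrightarrow> continuous_on \<Omega> (iter_partial is F)"
    using assms(1) unfolding Cr_on_def by blast
  have "continuous_on \<Omega> (iter_partial [i] F)" using c[rule_format, of "[i]"] assms(2) by simp
  thus ?thesis by simp
qed

lemma Cr_on_line_deriv_0:
  assumes "Cr_on m \<Omega> F" "m \<ge> 1" "x \<in> \<Omega>"
  shows "((\<lambda>t. F (x + t *\<^sub>R axis i 1)) has_real_derivative partial i F x) (at 0)"
proof -
  have "(\<lambda>t. F (x + t *\<^sub>R axis i 1)) differentiable (at 0)"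
  proof -
    have d: "\<forall>is i. length is < m \<longrightarrow> (\<forall>x\<in>\<Omega>. (\<lambda>t::real. iter_partial is F (x + t *\<^sub>R axis i 1)) differentiable (at 0))"
      using assms(1) unfolding Cr_on_def by blast
    show ?thesis using d[rule_format, of "[]" x i] assms(2,3) by simp
  qed
  thus ?thesis unfolding partial_def by (simp add: DERIV_deriv_iff_real_differentiable)
qed

lemma Cr_on_line_deriv:
  assumes "Cr_on m \<Omega> F" "m \<ge> 1" "x + t *\<^sub>R axis i 1 \<in> \<Omega>"
  shows "((\<lambda>s. F (x + s *\<^sub>R axis i 1)) has_real_derivative partial i F (x + t *\<^sub>R axis i 1)) (at t)"
proof -
  have "((\<lambda>u. F ((x + t *\<^sub>R axis i 1) + u *\<^sub>R axis i 1)) has_real_derivative partial i F (x + t *\<^sub>R axis i 1)) (at 0)"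
    by (rule Cr_on_line_deriv_0[OF assms])
  moreover have "(\<lambda>u. F ((x + t *\<^sub>R axis i 1) + u *\<^sub>R axis i 1)) = (\<lambda>u. (\<lambda>s. F (x + s *\<^sub>R axis i 1)) (u + t))"
    by (auto simp: algebra_simps)
  ultimately show ?thesis using DERIV_shift[of "\<lambda>s. F (x + s *\<^sub>R axis i 1)" _ 0 t] by simp
qed

lemma partial_cong_open:
  assumes "open \<Omega>" "\<forall>x\<in>\<Omega>. F x = G x" "x \<in> \<Omega>"
  shows "partial i F x = partial i G x"
  unfolding partial_def
proof (rule deriv_cong_ev[OF _ refl])
  have "open ((\<lambda>t::real. x + t *\<^sub>R axis i 1) -` \<Omega>)"
    using assms(1) by (rule continuous_open_vimage) (intro continuous_intros)
  hence "eventually (\<lambda>t. t \<in> (\<lambda>t::real. x + t *\<^sub>R axis i 1) -` \<Omega>) (nhds 0)"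
    using assms(3) by (intro eventually_nhds_in_open) auto
  hence "eventually (\<lambda>t. x + t *\<^sub>R axis i 1 \<in> \<Omega>) (nhds 0)" by simp
  thus "\<forall>\<^sub>F t in nhds 0. F (x + t *\<^sub>R axis i 1) = G (x + t *\<^sub>R axis i 1)"
    by eventually_elim (use assms in auto)
qed

lemma MVT_abs:
  fixes g g' :: "real \<Rightarrow> real"
  assumes "\<And>t. \<bar>t\<bar> \<le> \<bar>a\<bar> \<Longrightarrow> (g has_real_derivative g' t) (at t)"
  shows "\<exists>s. \<bar>s\<bar> \<le> \<bar>a\<bar> \<and> g a - g 0 = a * g' s"
proof (cases a "0::real" rule: linorder_cases)
  case less
  obtain z where "a < z" "z < 0" "g 0 - g a = (0 - a) * g' z"
    using MVT2[of a 0 g g'] less assms by auto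
  thus ?thesis using less by (intro exI[of _ z]) (auto simp: algebra_simps)
next
  case equal thus ?thesis by auto
next
  case greater
  obtain z where "0 < z" "z < a" "g a - g 0 = (a - 0) * g' z"
    using MVT2[of 0 a g g'] greater assms by auto
  thus ?thesis using greater by (intro exI[of _ z]) auto
qed

lemma isCont_eventually_dist:
  assumes "isCont f y" "e > 0"
  shows "eventually (\<lambda>w. dist (f w) (f y) < e) (nhds y)"
proof -
  have "eventually (\<lambda>w. dist (f w) (f y) < e) (at y)"
    using assms unfolding isCont_def by (rule tendstoD)
  thus ?thesis unfolding eventually_at_filter by eventually_elim (use assms in auto)
qed

definition coord_sum :: "'n::finite set \<Rightarrow> real ^ 'n \<Rightarrow> real ^ 'n" where
  "coord_sum S v = (\<Sum>i\<in>S. (v $ i) *\<^sub>R axis i 1)"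

lemma coord_sum_nth: "finite S \<Longrightarrow> coord_sum S v $ j = (if j \<in> S then v $ j else 0)"
  unfolding coord_sum_def by (simp add: axis_def if_distrib cong: if_cong)

lemma coord_sum_UNIV: "coord_sum UNIV v = v"
  using basis_expansion[of v] unfolding coord_sum_def scalar_mult_eq_scaleR by simp

lemma norm_coord_sum_add_le:
  assumes "i \<notin> S" "\<bar>s\<bar> \<le> \<bar>v $ i\<bar>"
  shows "norm (coord_sum S v + s *\<^sub>R axis i 1) \<le> norm v"
proof (rule norm_le_componentwise_cart)
  fix j
  show "norm ((coord_sum S v + s *\<^sub>R axis i 1) $ j) \<le> norm (v $ j)"
    using assms by (auto simp: coord_sum_nth axis_def)
qed

text \<open>Walk from y to y + v one coordinate direction at a time, applying the mean value theorem
  on each leg; the legs stay in the ball because each partial sum is componentwise below v.\<close>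

lemma coord_sum_increment_bound:
  fixes F :: "real ^ 'n::finite \<Rightarrow> real"
  assumes Cr: "Cr_on m \<Omega> F" and m: "m \<ge> 1"
    and near: "\<And>w. dist w y < d \<Longrightarrow> w \<in> \<Omega> \<and> (\<forall>i. dist (partial i F w) (partial i F y) < e)"
    and v: "norm v < d" and S: "finite S"
  shows "\<bar>F (y + coord_sum S v) - F y - (\<Sum>i\<in>S. v $ i * partial i F y)\<bar> \<le> e * (\<Sum>i\<in>S. \<bar>v $ i\<bar>)"
  using S
proof (induction S rule: finite_induct)
  case empty thus ?case by (simp add: coord_sum_def)
next
  case (insert i S)
  define x0 where "x0 = y + coord_sum S v"
  have insert_eq: "coord_sum (insert i S) v = coord_sum S v + v $ i *\<^sub>R axis i 1"
    using insert unfolding coord_sum_def by (simp add: add.commute)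
  have inball: "dist (x0 + t *\<^sub>R axis i 1) y < d" if "\<bar>t\<bar> \<le> \<bar>v $ i\<bar>" for t
  proof -
    have "dist (x0 + t *\<^sub>R axis i 1) y = norm (coord_sum S v + t *\<^sub>R axis i 1)"
      unfolding x0_def dist_norm by (simp add: algebra_simps)
    also have "\<dots> \<le> norm v" by (rule norm_coord_sum_add_le) (use insert that in auto)
    finally show ?thesis using v by simp
  qed
  obtain s where s: "\<bar>s\<bar> \<le> \<bar>v $ i\<bar>"
    and mv: "F (x0 + v $ i *\<^sub>R axis i 1) - F (x0 + 0 *\<^sub>R axis i 1) = v $ i * partial i F (x0 + s *\<^sub>R axis i 1)"
    using MVT_abs[of "v $ i" "\<lambda>t. F (x0 + t *\<^sub>R axis i 1)" "\<lambda>t. partial i F (x0 + t *\<^sub>R axis i 1)"]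
      Cr_on_line_deriv[OF Cr m] inball near by blast
  have "\<bar>partial i F (x0 + s *\<^sub>R axis i 1) - partial i F y\<bar> < e"
    using near[OF inball[OF s]] by (simp add: dist_real_def)
  hence diff: "\<bar>v $ i * partial i F (x0 + s *\<^sub>R axis i 1) - v $ i * partial i F y\<bar> \<le> e * \<bar>v $ i\<bar>"
    by (simp add: abs_mult flip: right_diff_distrib) (metis abs_ge_zero less_eq_real_def mult.commute mult_left_mono)
  have "F (y + coord_sum (insert i S) v) - F y - (\<Sum>j\<in>insert i S. v $ j * partial j F y)
    = (F (x0 + v $ i *\<^sub>R axis i 1) - F x0 - v $ i * partial i F y)
      + (F (y + coord_sum S v) - F y - (\<Sum>j\<in>S. v $ j * partial j F y))"
    using insert unfolding insert_eq x0_def by (simp add: algebra_simps)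
  also have "F (x0 + v $ i *\<^sub>R axis i 1) - F x0 = v $ i * partial i F (x0 + s *\<^sub>R axis i 1)"
    using mv by simp
  finally have "\<bar>F (y + coord_sum (insert i S) v) - F y - (\<Sum>j\<in>insert i S. v $ j * partial j F y)\<bar>
      \<le> e * \<bar>v $ i\<bar> + e * (\<Sum>j\<in>S. \<bar>v $ j\<bar>)"
    using diff insert.IH by linarith
  thus ?case using insert by (simp add: algebra_simps)
qed

lemma Cr_on_has_derivative:
  fixes F :: "real ^ 'n::finite \<Rightarrow> real"
  assumes Cr: "Cr_on m \<Omega> F" and m: "m \<ge> 1" and op: "open \<Omega>" and y: "y \<in> \<Omega>"
  shows "(F has_derivative (\<lambda>v. \<Sum>i\<in>UNIV. v $ i * partial i F y)) (at y)"
  unfolding has_derivative_at_alt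
proof (intro conjI allI impI)
  show "bounded_linear (\<lambda>v. \<Sum>i\<in>UNIV. v $ i * partial i F y)"
    by (intro bounded_linear_sum bounded_linear_mult_const bounded_linear_vec_nth)
next
  fix e :: real assume e: "e > 0"
  define e' where "e' = e / real CARD('n)"
  have e': "e' > 0" using e unfolding e'_def by simp
  have "\<forall>\<^sub>F w in nhds y. w \<in> \<Omega> \<and> (\<forall>i. dist (partial i F w) (partial i F y) < e')"
  proof (intro eventually_conj eventually_all_finite allI)
    show "\<forall>\<^sub>F w in nhds y. w \<in> \<Omega>" using op y by (rule eventually_nhds_in_open)
    fix i
    have "isCont (partial i F) y"
      using continuous_on_partial_Cr[OF Cr m] op y continuous_on_eq_continuous_at by blast
    thus "\<forall>\<^sub>F w in nhds y. dist (partial i F w) (partial i F y) < e'"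
      using e' by (rule isCont_eventually_dist)
  qed
  then obtain d where d: "d > 0" and near: "\<And>w. dist w y < d \<Longrightarrow> w \<in> \<Omega> \<and> (\<forall>i. dist (partial i F w) (partial i F y) < e')"
    unfolding eventually_nhds_metric by blast
  show "\<exists>d>0. \<forall>y'. norm (y' - y) < d \<longrightarrow>
      norm (F y' - F y - (\<Sum>i\<in>UNIV. (y' - y) $ i * partial i F y)) \<le> e * norm (y' - y)"
  proof (intro exI[of _ d] conjI allI impI d)
    fix y' assume "norm (y' - y) < d"
    have "\<bar>F y' - F y - (\<Sum>i\<in>UNIV. (y' - y) $ i * partial i F y)\<bar> \<le> e' * (\<Sum>i\<in>UNIV. \<bar>(y' - y) $ i\<bar>)"
      using coord_sum_increment_bound[OF Cr m near \<open>norm (y' - y) < d\<close>, of UNIV]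
      unfolding coord_sum_UNIV by simp
    also have "\<dots> \<le> e' * (\<Sum>i\<in>(UNIV::'n set). norm (y' - y))"
      using e' by (intro mult_left_mono sum_mono component_le_norm_cart) auto
    also have "\<dots> = e * norm (y' - y)" unfolding e'_def by simp
    finally show "norm (F y' - F y - (\<Sum>i\<in>UNIV. (y' - y) $ i * partial i F y)) \<le> e * norm (y' - y)"
      by simp
  qed
qed

section \<open>Symmetry of second partial derivatives\<close>

lemma Cr_on_partial:
  assumes "Cr_on m \<Omega> F" "m \<ge> 1"
  shows "Cr_on (m - 1) \<Omega> (partial i F)"
  using Cr_on_iter_partial[OF assms(1), of "[i]"] assms(2) by simp

lemma second_difference_MVT:
  fixes F :: "real ^ 'n::finite \<Rightarrow> real"
  assumes Cr: "Cr_on m \<Omega> F" and m: "m \<ge> 2"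
    and mem: "\<And>a b. \<bar>a\<bar> \<le> \<bar>s\<bar> \<Longrightarrow> \<bar>b\<bar> \<le> \<bar>s\<bar> \<Longrightarrow> x + a *\<^sub>R axis i 1 + b *\<^sub>R axis j 1 \<in> \<Omega>"
  shows "\<exists>\<sigma> \<tau>. \<bar>\<sigma>\<bar> \<le> \<bar>s\<bar> \<and> \<bar>\<tau>\<bar> \<le> \<bar>s\<bar> \<and>
    F (x + s *\<^sub>R axis j 1 + s *\<^sub>R axis i 1) - F (x + s *\<^sub>R axis i 1) - F (x + s *\<^sub>R axis j 1) + F x
      = s * s * partial j (partial i F) (x + \<sigma> *\<^sub>R axis i 1 + \<tau> *\<^sub>R axis j 1)"
proof -
  have m1: "m \<ge> 1" using m by simp
  have Cri: "Cr_on (m - 1) \<Omega> (partial i F)" "m - 1 \<ge> 1" using Cr_on_partial[OF Cr m1] m by auto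
  define \<phi> where "\<phi> u = F ((x + s *\<^sub>R axis j 1) + u *\<^sub>R axis i 1) - F (x + u *\<^sub>R axis i 1)" for u
  have d\<phi>: "(\<phi> has_real_derivative (partial i F ((x + s *\<^sub>R axis j 1) + u *\<^sub>R axis i 1) - partial i F (x + u *\<^sub>R axis i 1))) (at u)"
    if "\<bar>u\<bar> \<le> \<bar>s\<bar>" for u
  proof -
    have "(x + s *\<^sub>R axis j 1) + u *\<^sub>R axis i 1 \<in> \<Omega>" using mem[of u s] that by (simp add: add_ac)
    moreover have "x + u *\<^sub>R axis i 1 \<in> \<Omega>" using mem[of u 0] that by simp
    ultimately show ?thesis unfolding \<phi>_def by (intro DERIV_diff Cr_on_line_deriv[OF Cr m1])
  qed
  obtain \<sigma> where \<sigma>: "\<bar>\<sigma>\<bar> \<le> \<bar>s\<bar>" and e1: "\<phi> s - \<phi> 0 =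
      s * (partial i F ((x + s *\<^sub>R axis j 1) + \<sigma> *\<^sub>R axis i 1) - partial i F (x + \<sigma> *\<^sub>R axis i 1))"
    using MVT_abs[OF d\<phi>] by auto
  define \<psi> where "\<psi> v = partial i F ((x + \<sigma> *\<^sub>R axis i 1) + v *\<^sub>R axis j 1)" for v
  have d\<psi>: "(\<psi> has_real_derivative partial j (partial i F) ((x + \<sigma> *\<^sub>R axis i 1) + v *\<^sub>R axis j 1)) (at v)"
    if "\<bar>v\<bar> \<le> \<bar>s\<bar>" for v
    unfolding \<psi>_def using mem[of \<sigma> v] that \<sigma> by (intro Cr_on_line_deriv[OF Cri]) auto
  obtain \<tau> where \<tau>: "\<bar>\<tau>\<bar> \<le> \<bar>s\<bar>" and e2: "\<psi> s - \<psi> 0 =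
      s * partial j (partial i F) ((x + \<sigma> *\<^sub>R axis i 1) + \<tau> *\<^sub>R axis j 1)"
    using MVT_abs[OF d\<psi>] by auto
  have "\<psi> s - \<psi> 0 = partial i F ((x + s *\<^sub>R axis j 1) + \<sigma> *\<^sub>R axis i 1) - partial i F (x + \<sigma> *\<^sub>R axis i 1)"
    unfolding \<psi>_def by (simp add: add_ac)
  hence "\<phi> s - \<phi> 0 = s * (s * partial j (partial i F) ((x + \<sigma> *\<^sub>R axis i 1) + \<tau> *\<^sub>R axis j 1))"
    using e1 e2 by simp
  moreover have "\<phi> s - \<phi> 0 = F (x + s *\<^sub>R axis j 1 + s *\<^sub>R axis i 1) - F (x + s *\<^sub>R axis i 1) - F (x + s *\<^sub>R axis j 1) + F x"
    unfolding \<phi>_def by simp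
  ultimately show ?thesis using \<sigma> \<tau> by (intro exI[of _ \<sigma>] exI[of _ \<tau>]) simp
qed

lemma second_partials_agree_nearby:
  fixes F :: "real ^ 'n::finite \<Rightarrow> real"
  assumes Cr: "Cr_on m \<Omega> F" and m: "m \<ge> 2" and d: "d > 0"
    and ball: "\<And>w. dist w x < d \<Longrightarrow> w \<in> \<Omega>"
  shows "\<exists>p p'. dist p x < d \<and> dist p' x < d \<and> partial j (partial i F) p = partial i (partial j F) p'"
proof -
  define s where "s = d / 3"
  have s: "s > 0" using d unfolding s_def by simp
  have near: "dist (x + a *\<^sub>R axis k 1 + b *\<^sub>R axis l 1) x < d" if "\<bar>a\<bar> \<le> \<bar>s\<bar>" "\<bar>b\<bar> \<le> \<bar>s\<bar>" for a b and k l :: 'n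
  proof -
    have "dist (x + a *\<^sub>R axis k 1 + b *\<^sub>R axis l 1) x = norm (a *\<^sub>R axis k (1::real) + b *\<^sub>R axis l (1::real))"
      by (simp add: dist_norm)
    also have "\<dots> \<le> \<bar>a\<bar> + \<bar>b\<bar>" by (rule order_trans[OF norm_triangle_ineq]) simp
    also have "\<dots> < d" using that s d unfolding s_def by simp
    finally show ?thesis .
  qed
  have mem: "\<And>a b (k::'n) (l::'n). \<bar>a\<bar> \<le> \<bar>s\<bar> \<Longrightarrow> \<bar>b\<bar> \<le> \<bar>s\<bar> \<Longrightarrow> x + a *\<^sub>R axis k 1 + b *\<^sub>R axis l 1 \<in> \<Omega>"
    using near ball by blast
  obtain \<sigma> \<tau> where st: "\<bar>\<sigma>\<bar> \<le> \<bar>s\<bar>" "\<bar>\<tau>\<bar> \<le> \<bar>s\<bar>" and eq1: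
    "F (x + s *\<^sub>R axis j 1 + s *\<^sub>R axis i 1) - F (x + s *\<^sub>R axis i 1) - F (x + s *\<^sub>R axis j 1) + F x
      = s * s * partial j (partial i F) (x + \<sigma> *\<^sub>R axis i 1 + \<tau> *\<^sub>R axis j 1)"
    using second_difference_MVT[OF Cr m, of s x i j] mem by blast
  obtain \<sigma>' \<tau>' where st': "\<bar>\<sigma>'\<bar> \<le> \<bar>s\<bar>" "\<bar>\<tau>'\<bar> \<le> \<bar>s\<bar>" and eq2:
    "F (x + s *\<^sub>R axis i 1 + s *\<^sub>R axis j 1) - F (x + s *\<^sub>R axis j 1) - F (x + s *\<^sub>R axis i 1) + F x
      = s * s * partial i (partial j F) (x + \<sigma>' *\<^sub>R axis j 1 + \<tau>' *\<^sub>R axis i 1)"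
    using second_difference_MVT[OF Cr m, of s x j i] mem by blast
  have swap: "x + s *\<^sub>R axis j 1 + s *\<^sub>R axis i 1 = x + s *\<^sub>R axis i 1 + s *\<^sub>R axis j 1"
    by (simp add: add_ac)
  have "s * s * partial j (partial i F) (x + \<sigma> *\<^sub>R axis i 1 + \<tau> *\<^sub>R axis j 1)
      = s * s * partial i (partial j F) (x + \<sigma>' *\<^sub>R axis j 1 + \<tau>' *\<^sub>R axis i 1)"
    using eq1 eq2 unfolding swap by linarith
  hence "partial j (partial i F) (x + \<sigma> *\<^sub>R axis i 1 + \<tau> *\<^sub>R axis j 1)
      = partial i (partial j F) (x + \<sigma>' *\<^sub>R axis j 1 + \<tau>' *\<^sub>R axis i 1)"
    using s by simp
  thus ?thesis using near[OF st] near[OF st'] by blast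
qed

lemma partial_partial_commute:
  fixes F :: "real ^ 'n::finite \<Rightarrow> real"
  assumes Cr: "Cr_on m \<Omega> F" and m: "m \<ge> 2" and op: "open \<Omega>" and x: "x \<in> \<Omega>"
  shows "partial i (partial j F) x = partial j (partial i F) x"
proof (rule ccontr)
  define A where "A = partial j (partial i F)"
  define B where "B = partial i (partial j F)"
  assume "partial i (partial j F) x \<noteq> partial j (partial i F) x"
  hence "B x \<noteq> A x" unfolding A_def B_def .
  define e where "e = \<bar>B x - A x\<bar> / 2"
  have e: "e > 0" using \<open>B x \<noteq> A x\<close> unfolding e_def by simp
  have c: "\<forall>is. length is \<le> m \<longrightarrow> continuous_on \<Omega> (iter_partial is F)"
    using Cr unfolding Cr_on_def by blast
  have cont: "continuous_on \<Omega> A" "continuous_on \<Omega> B"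
    using c[rule_format, of "[j, i]"] c[rule_format, of "[i, j]"] m unfolding A_def B_def by simp_all
  have "\<forall>\<^sub>F w in nhds x. w \<in> \<Omega> \<and> dist (A w) (A x) < e \<and> dist (B w) (B x) < e"
    using op x e cont continuous_on_eq_continuous_at
    by (intro eventually_conj eventually_nhds_in_open isCont_eventually_dist) auto
  then obtain d where d: "d > 0" and dP: "\<And>w. dist w x < d \<Longrightarrow> w \<in> \<Omega> \<and> dist (A w) (A x) < e \<and> dist (B w) (B x) < e"
    unfolding eventually_nhds_metric by blast
  have ball: "\<And>w. dist w x < d \<Longrightarrow> w \<in> \<Omega>" using dP by blast
  obtain p p' where "dist p x < d" "dist p' x < d" "A p = B p'"
    using second_partials_agree_nearby[OF Cr m d ball, where i=i and j=j] unfolding A_def B_def by blast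
  moreover have "\<bar>A p - A x\<bar> < e" "\<bar>B p' - B x\<bar> < e"
    using dP[OF \<open>dist p x < d\<close>] dP[OF \<open>dist p' x < d\<close>] by (simp_all add: dist_real_def)
  ultimately have "\<bar>B x - A x\<bar> < 2 * e" by linarith
  thus False unfolding e_def by simp
qed

section \<open>Partial derivatives of multi-index order\<close>

lemma partial_iter_partial_commute:
  fixes F :: "real ^ 'n::finite \<Rightarrow> real"
  assumes Cr: "Cr_on m \<Omega> F" and op: "open \<Omega>" and L: "length L < m" and x: "x \<in> \<Omega>"
  shows "partial i (iter_partial L F) x = iter_partial L (partial i F) x"
  using L x
proof (induction L arbitrary: x)
  case Nil thus ?case by simp
next
  case (Cons j L)
  have CrL: "Cr_on (m - length L) \<Omega> (iter_partial L F)"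
    using Cr_on_iter_partial[OF Cr] Cons.prems by simp
  have "partial i (iter_partial (j # L) F) x = partial j (partial i (iter_partial L F)) x"
    using partial_partial_commute[OF CrL _ op Cons.prems(2)] Cons.prems by simp
  also have "\<dots> = partial j (iter_partial L (partial i F)) x"
    by (rule partial_cong_open[OF op _ Cons.prems(2)]) (use Cons in auto)
  finally show ?case by simp
qed

definition coord_blocks :: "('n \<Rightarrow> nat) \<Rightarrow> 'n list \<Rightarrow> 'n list" where
  "coord_blocks \<alpha> l = concat (map (\<lambda>j. replicate (\<alpha> j) j) l)"

lemma funpow_partial_eq_iter_partial: "(partial i ^^ n) G = iter_partial (replicate n i) G"
  by (induction n) auto

lemma foldr_funpow_partial_eq_iter_partial: "foldr (\<lambda>i g. (partial i ^^ \<alpha> i) g) l F = iter_partial (coord_blocks \<alpha> l) F"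
  by (induction l) (auto simp: coord_blocks_def funpow_partial_eq_iter_partial iter_partial_append)

lemma coord_list_distinct_UNIV: "distinct (coord_list :: 'n::finite list) \<and> set coord_list = (UNIV :: 'n set)"
proof -
  have "\<exists>l. distinct l \<and> set l = (UNIV :: 'n set)"
    using finite_distinct_list[of "UNIV :: 'n set"] by auto
  thus ?thesis unfolding coord_list_def by (rule someI_ex)
qed

lemma mpartial_eq_iter_partial: "mpartial \<alpha> f = iter_partial (coord_blocks \<alpha> coord_list) f"
  unfolding mpartial_def foldr_funpow_partial_eq_iter_partial ..

lemma length_coord_blocks: "length (coord_blocks \<alpha> l) = sum_list (map \<alpha> l)"
  unfolding coord_blocks_def by (induction l) auto

lemma length_coord_blocks_coord_list: "length (coord_blocks \<alpha> (coord_list :: 'n::finite list)) = mi_abs \<alpha>"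
  unfolding length_coord_blocks mi_abs_def using coord_list_distinct_UNIV sum_list_distinct_conv_sum_set by metis

lemma Cr_on_mpartial:
  assumes "Cr_on r \<Omega> f" "mi_abs \<alpha> \<le> r"
  shows "Cr_on (r - mi_abs \<alpha>) \<Omega> (mpartial \<alpha> f)"
  using Cr_on_iter_partial[OF assms(1), of "coord_blocks \<alpha> coord_list"] assms(2)
  unfolding mpartial_eq_iter_partial length_coord_blocks_coord_list by simp

lemma partial_mpartial_eq_mi_inc:
  fixes f :: "real ^ 'n::finite \<Rightarrow> real"
  assumes Cr: "Cr_on r \<Omega> f" and op: "open \<Omega>" and a: "mi_abs \<alpha> + 1 \<le> r" and x: "x \<in> \<Omega>"
  shows "partial i (mpartial \<alpha> f) x = mpartial (mi_inc \<alpha> i) f x"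
proof -
  have "i \<in> set coord_list" using coord_list_distinct_UNIV by auto
  then obtain c1 c2 where c: "coord_list = c1 @ i # c2" by (meson split_list)
  have "distinct (c1 @ i # c2)" using coord_list_distinct_UNIV c by metis
  hence dist: "i \<notin> set c1" "i \<notin> set c2" by auto
  have b1: "coord_blocks (mi_inc \<alpha> i) c1 = coord_blocks \<alpha> c1" "coord_blocks (mi_inc \<alpha> i) c2 = coord_blocks \<alpha> c2"
    using dist unfolding coord_blocks_def mi_inc_def by (auto intro!: arg_cong[where f = concat] map_cong)
  define H where "H = iter_partial (replicate (\<alpha> i) i @ coord_blocks \<alpha> c2) f"
  have ma: "mpartial \<alpha> f = iter_partial (coord_blocks \<alpha> c1) H"
    unfolding mpartial_eq_iter_partial H_def c by (simp add: coord_blocks_def iter_partial_append)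
  have mb: "mpartial (mi_inc \<alpha> i) f = iter_partial (coord_blocks \<alpha> c1) (partial i H)"
    unfolding mpartial_eq_iter_partial H_def c using b1 by (simp add: coord_blocks_def iter_partial_append mi_inc_def)
  have lens: "length (coord_blocks \<alpha> c1) + (\<alpha> i + length (coord_blocks \<alpha> c2)) = mi_abs \<alpha>"
    using length_coord_blocks_coord_list[of \<alpha>] unfolding c by (simp add: coord_blocks_def)
  have CrH: "Cr_on (r - (\<alpha> i + length (coord_blocks \<alpha> c2))) \<Omega> H"
    unfolding H_def using Cr_on_iter_partial[OF Cr, of "replicate (\<alpha> i) i @ coord_blocks \<alpha> c2"] lens a by simp
  show ?thesis
    unfolding ma mb using partial_iter_partial_commute[OF CrH op _ x, of "coord_blocks \<alpha> c1" i] lens a by simp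
qed

section \<open>Derivatives along a segment\<close>

lemma closed_segment_param_mem:
  assumes "closed_segment z x \<subseteq> \<Omega>" "t \<in> {0..1::real}"
  shows "z + t *\<^sub>R (x - z) \<in> \<Omega>"
proof -
  have "z + t *\<^sub>R (x - z) = (1 - t) *\<^sub>R z + t *\<^sub>R x" by (simp add: algebra_simps)
  hence "z + t *\<^sub>R (x - z) \<in> closed_segment z x" using assms(2) unfolding in_segment by auto
  thus ?thesis using assms(1) by auto
qed

lemma holder_semi_bound:
  assumes hc: "Crgamma_on r \<gamma> \<Omega> f" and a: "\<alpha> \<in> mi_eq r" and y: "y \<in> \<Omega>" "y' \<in> \<Omega>"
  shows "\<bar>mpartial \<alpha> f y - mpartial \<alpha> f y'\<bar> \<le> holder_semi \<gamma> \<Omega> (mpartial \<alpha> f) * norm (y - y') powr \<gamma>"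
proof (cases "y = y'")
  case True thus ?thesis by simp
next
  case False
  define q where "q = \<bar>mpartial \<alpha> f y - mpartial \<alpha> f y'\<bar> / norm (y - y') powr \<gamma>"
  have "q \<in> holder_quots \<gamma> \<Omega> (mpartial \<alpha> f)" unfolding q_def holder_quots_def using y False by blast
  moreover have "bdd_above (holder_quots \<gamma> \<Omega> (mpartial \<alpha> f))" using hc a unfolding Crgamma_on_def by auto
  ultimately have "q \<le> holder_semi \<gamma> \<Omega> (mpartial \<alpha> f)" unfolding holder_semi_def by (rule cSup_upper)
  moreover have "norm (y - y') powr \<gamma> > 0" using False by simp
  ultimately show ?thesis unfolding q_def by (simp add: divide_le_eq)
qed

lemma mpartial_line_has_derivative:
  fixes f :: "real ^ 'n::finite \<Rightarrow> real"
  assumes Cr: "Cr_on r \<Omega> f" and op: "open \<Omega>" and a: "mi_abs \<alpha> < r" and y: "z + t *\<^sub>R h \<in> \<Omega>"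
  shows "((\<lambda>t. mpartial \<alpha> f (z + t *\<^sub>R h)) has_real_derivative
      (\<Sum>i\<in>UNIV. h $ i * mpartial (mi_inc \<alpha> i) f (z + t *\<^sub>R h))) (at t)"
proof -
  have CrF: "Cr_on (r - mi_abs \<alpha>) \<Omega> (mpartial \<alpha> f)" using Cr_on_mpartial[OF Cr] a by simp
  have D: "(mpartial \<alpha> f has_derivative (\<lambda>v. \<Sum>i\<in>UNIV. v $ i * partial i (mpartial \<alpha> f) (z + t *\<^sub>R h))) (at (z + t *\<^sub>R h))"
    using Cr_on_has_derivative[OF CrF _ op y] a by simp
  have lin: "((\<lambda>t. z + t *\<^sub>R h) has_derivative (\<lambda>s. s *\<^sub>R h)) (at t)"
    by (auto intro!: derivative_eq_intros)
  have "((\<lambda>t. mpartial \<alpha> f (z + t *\<^sub>R h)) has_derivative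
      (\<lambda>s. \<Sum>i\<in>UNIV. (s *\<^sub>R h) $ i * partial i (mpartial \<alpha> f) (z + t *\<^sub>R h))) (at t)"
    using has_derivative_compose[OF lin D] by (simp add: o_def)
  moreover have "(\<lambda>s. \<Sum>i\<in>UNIV. (s *\<^sub>R h) $ i * partial i (mpartial \<alpha> f) (z + t *\<^sub>R h))
      = (*) (\<Sum>i\<in>UNIV. h $ i * mpartial (mi_inc \<alpha> i) f (z + t *\<^sub>R h))"
  proof (rule ext)
    fix s
    have "(\<Sum>i\<in>UNIV. (s *\<^sub>R h) $ i * partial i (mpartial \<alpha> f) (z + t *\<^sub>R h))
        = (\<Sum>i\<in>UNIV. s * (h $ i * mpartial (mi_inc \<alpha> i) f (z + t *\<^sub>R h)))"
      using partial_mpartial_eq_mi_inc[OF Cr op _ y] a by (intro sum.cong) auto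
    thus "(\<Sum>i\<in>UNIV. (s *\<^sub>R h) $ i * partial i (mpartial \<alpha> f) (z + t *\<^sub>R h))
      = (\<Sum>i\<in>UNIV. h $ i * mpartial (mi_inc \<alpha> i) f (z + t *\<^sub>R h)) * s"
      by (simp add: sum_distrib_left mult.commute)
  qed
  ultimately show ?thesis unfolding has_field_derivative_def by simp
qed

definition line_deriv :: "(real ^ 'n::finite \<Rightarrow> real) \<Rightarrow> real ^ 'n \<Rightarrow> real ^ 'n \<Rightarrow> nat \<Rightarrow> real \<Rightarrow> real" where
  "line_deriv f z h m t = (\<Sum>\<alpha>\<in>mi_eq m. (fact m / real (mi_fact \<alpha>)) * (mono_pow h \<alpha> * mpartial \<alpha> f (z + t *\<^sub>R h)))"

lemma line_deriv_has_derivative: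
  fixes f :: "real ^ 'n::finite \<Rightarrow> real"
  assumes Cr: "Cr_on r \<Omega> f" and op: "open \<Omega>" and m: "m < r" and y: "z + t *\<^sub>R h \<in> \<Omega>"
  shows "(line_deriv f z h m has_real_derivative line_deriv f z h (Suc m) t) (at t)"
proof -
  have "(line_deriv f z h m has_real_derivative
     (\<Sum>\<alpha>\<in>mi_eq m. (fact m / real (mi_fact \<alpha>)) * (mono_pow h \<alpha> * (\<Sum>i\<in>UNIV. h $ i * mpartial (mi_inc \<alpha> i) f (z + t *\<^sub>R h))))) (at t)"
    unfolding line_deriv_def[abs_def]
    by (intro DERIV_sum DERIV_cmult mpartial_line_has_derivative[OF Cr op _ y]) (auto simp: mi_eq_def m)
  moreover have "(\<Sum>\<alpha>\<in>mi_eq m. (fact m / real (mi_fact \<alpha>)) * (mono_pow h \<alpha> * (\<Sum>i\<in>UNIV. h $ i * mpartial (mi_inc \<alpha> i) f (z + t *\<^sub>R h))))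
     = (\<Sum>\<alpha>\<in>mi_eq m. (fact m / real (mi_fact \<alpha>)) * (\<Sum>i\<in>UNIV. mono_pow h (mi_inc \<alpha> i) * mpartial (mi_inc \<alpha> i) f (z + t *\<^sub>R h)))"
    by (intro sum.cong refl arg_cong2[where f="(*)"]) (simp add: mono_pow_mi_inc sum_distrib_left mult_ac)
  moreover have "\<dots> = line_deriv f z h (Suc m) t"
    unfolding line_deriv_def by (rule sum_mi_eq_mi_inc)
  ultimately show ?thesis by simp
qed

section \<open>Taylor's formula in several variables\<close>

definition taylor_poly :: "(real ^ 'n::finite \<Rightarrow> real) \<Rightarrow> real ^ 'n \<Rightarrow> nat \<Rightarrow> real ^ 'n \<Rightarrow> real" where
  "taylor_poly f z r y = (\<Sum>\<alpha>\<in>mi_le r. (mpartial \<alpha> f z / real (mi_fact \<alpha>)) * mono_pow (y - z) \<alpha>)"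

lemma foldr_id: "foldr (\<lambda>i. id) l f = f"
  by (induction l) auto

lemma mpartial_0: "mpartial (\<lambda>_. 0) f = f"
  unfolding mpartial_def by (simp add: foldr_id)

lemma mi_fact_0: "mi_fact ((\<lambda>_. 0) :: 'n::finite \<Rightarrow> nat) = 1"
  unfolding mi_fact_def by simp

lemma mono_pow_zero_index: "mono_pow h (\<lambda>_. 0) = 1"
  unfolding mono_pow_def by simp

lemma Cauchy_Schwarz_weighted_sum:
  fixes W a b :: "'a \<Rightarrow> real"
  assumes "\<And>x. W x \<ge> 0"
  shows "(\<Sum>x\<in>A. W x * a x * b x) \<le> sqrt (\<Sum>x\<in>A. W x * (a x)\<^sup>2) * sqrt (\<Sum>x\<in>A. W x * (b x)\<^sup>2)"
proof -
  let ?a = "\<lambda>x. sqrt (W x) * a x" and ?b = "\<lambda>x. sqrt (W x) * b x"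
  have "(\<Sum>x\<in>A. ?a x * ?b x)\<^sup>2 \<le> (\<Sum>x\<in>A. (?a x)\<^sup>2) * (\<Sum>x\<in>A. (?b x)\<^sup>2)"
    by (rule Cauchy_Schwarz_ineq_sum)
  moreover have "\<And>x. ?a x * ?b x = W x * a x * b x" "\<And>x. (?a x)\<^sup>2 = W x * (a x)\<^sup>2" "\<And>x. (?b x)\<^sup>2 = W x * (b x)\<^sup>2"
    using assms by (auto simp: power_mult_distrib real_sqrt_mult_self mult_ac)
  ultimately have "(\<Sum>x\<in>A. W x * a x * b x)\<^sup>2 \<le> (\<Sum>x\<in>A. W x * (a x)\<^sup>2) * (\<Sum>x\<in>A. W x * (b x)\<^sup>2)"
    by simp
  hence "sqrt ((\<Sum>x\<in>A. W x * a x * b x)\<^sup>2) \<le> sqrt ((\<Sum>x\<in>A. W x * (a x)\<^sup>2) * (\<Sum>x\<in>A. W x * (b x)\<^sup>2))"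
    by (rule real_sqrt_le_mono)
  thus ?thesis by (simp add: real_sqrt_mult)
qed

lemma power2_mono_pow: "(mono_pow h \<alpha>)\<^sup>2 = mono_pow (\<chi> i. (h $ i)\<^sup>2) \<alpha>"
  unfolding mono_pow_def by (simp add: prod_power_distrib flip: power_mult) (simp add: mult.commute)

lemma power2_norm_vec_sum: "(norm (h :: real ^ 'n::finite))\<^sup>2 = (\<Sum>i\<in>UNIV. (\<chi> i. (h $ i)\<^sup>2) $ i)"
proof -
  have "(norm h)\<^sup>2 = inner h h" by (rule power2_norm_eq_inner)
  also have "\<dots> = (\<Sum>i\<in>UNIV. h $ i * h $ i)" by (simp add: inner_vec_def)
  finally show ?thesis by (simp add: power2_eq_square)
qed

lemma sum_multinomial_power2_mono_pow:
  "(\<Sum>\<alpha>\<in>mi_eq r. (fact r / real (mi_fact \<alpha>)) * (mono_pow h \<alpha>)\<^sup>2) = (norm (h :: real ^ 'n::finite)) ^ (2 * r)"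
  unfolding power2_mono_pow power_mult power2_norm_vec_sum multinomial_theorem ..

lemma sum_mi_le_by_order:
  fixes g :: "('n::finite \<Rightarrow> nat) \<Rightarrow> real"
  shows "(\<Sum>m\<le>r. \<Sum>\<alpha>\<in>mi_eq m. g \<alpha>) = (\<Sum>\<alpha>\<in>mi_le r. g \<alpha>)"
proof -
  have "(\<Sum>m\<in>{..r}. \<Sum>\<alpha>\<in>{\<alpha>\<in>mi_le r. mi_abs \<alpha> = m}. g \<alpha>) = (\<Sum>\<alpha>\<in>mi_le r. g \<alpha>)"
    by (rule sum.group) (auto simp: mi_le_def intro: finite_mi_le[unfolded mi_le_def])
  moreover have "(\<Sum>m\<le>r. \<Sum>\<alpha>\<in>mi_eq m. g \<alpha>) = (\<Sum>m\<in>{..r}. \<Sum>\<alpha>\<in>{\<alpha>\<in>mi_le r. mi_abs \<alpha> = m}. g \<alpha>)"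
    by (intro sum.cong refl) (auto simp: mi_le_def mi_eq_def)
  ultimately show ?thesis by simp
qed

lemma line_deriv_holder:
  fixes f :: "real ^ 'n::finite \<Rightarrow> real"
  assumes hc: "Crgamma_on r \<gamma> \<Omega> f" and g: "\<gamma> > 0"
    and mem: "\<And>t. t \<in> {0..1} \<Longrightarrow> z + t *\<^sub>R h \<in> \<Omega>" and t: "t \<in> {0..1}"
  shows "\<bar>line_deriv f z h r t - line_deriv f z h r 0\<bar>
    \<le> norm h ^ r * norm h powr \<gamma>
       * sqrt (\<Sum>\<alpha>\<in>mi_eq r. (fact r / real (mi_fact \<alpha>)) * (holder_semi \<gamma> \<Omega> (mpartial \<alpha> f))\<^sup>2)
       * t powr \<gamma>"
proof -
  define S where "S \<alpha> = holder_semi \<gamma> \<Omega> (mpartial \<alpha> f)" for \<alpha> :: "'n \<Rightarrow> nat"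
  define W where "W \<alpha> = fact r / real (mi_fact \<alpha>)" for \<alpha> :: "'n \<Rightarrow> nat"
  have Wpos: "W \<alpha> \<ge> 0" for \<alpha> unfolding W_def by simp
  have z\<Omega>: "z \<in> \<Omega>" using mem[of 0] by simp
  have "line_deriv f z h r t - line_deriv f z h r 0
      = (\<Sum>\<alpha>\<in>mi_eq r. W \<alpha> * (mono_pow h \<alpha> * (mpartial \<alpha> f (z + t *\<^sub>R h) - mpartial \<alpha> f z)))"
    unfolding line_deriv_def W_def sum_subtractf[symmetric] by (rule sum.cong) (auto simp: algebra_simps)
  also have "\<bar>\<dots>\<bar> \<le> (\<Sum>\<alpha>\<in>mi_eq r. W \<alpha> * (\<bar>mono_pow h \<alpha>\<bar> * (S \<alpha> * (t powr \<gamma> * norm h powr \<gamma>))))"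
  proof (rule order_trans[OF sum_abs], rule sum_mono)
    fix \<alpha> :: "'n \<Rightarrow> nat" assume a: "\<alpha> \<in> mi_eq r"
    have "\<bar>mpartial \<alpha> f (z + t *\<^sub>R h) - mpartial \<alpha> f z\<bar> \<le> S \<alpha> * norm (z + t *\<^sub>R h - z) powr \<gamma>"
      unfolding S_def by (rule holder_semi_bound[OF hc a mem[OF t] z\<Omega>])
    also have "norm (z + t *\<^sub>R h - z) powr \<gamma> = t powr \<gamma> * norm h powr \<gamma>"
      using t by (simp add: powr_mult)
    finally show "\<bar>W \<alpha> * (mono_pow h \<alpha> * (mpartial \<alpha> f (z + t *\<^sub>R h) - mpartial \<alpha> f z))\<bar>
        \<le> W \<alpha> * (\<bar>mono_pow h \<alpha>\<bar> * (S \<alpha> * (t powr \<gamma> * norm h powr \<gamma>)))"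
      using Wpos[of \<alpha>] by (simp add: abs_mult mult_left_mono)
  qed
  also have "\<dots> = (t powr \<gamma> * norm h powr \<gamma>) * (\<Sum>\<alpha>\<in>mi_eq r. W \<alpha> * \<bar>mono_pow h \<alpha>\<bar> * S \<alpha>)"
    by (simp add: sum_distrib_left mult_ac)
  also have "\<dots> \<le> (t powr \<gamma> * norm h powr \<gamma>)
      * (sqrt (\<Sum>\<alpha>\<in>mi_eq r. W \<alpha> * \<bar>mono_pow h \<alpha>\<bar>\<^sup>2) * sqrt (\<Sum>\<alpha>\<in>mi_eq r. W \<alpha> * (S \<alpha>)\<^sup>2))"
    by (intro mult_left_mono Cauchy_Schwarz_weighted_sum Wpos) auto
  also have "(\<Sum>\<alpha>\<in>mi_eq r. W \<alpha> * \<bar>mono_pow h \<alpha>\<bar>\<^sup>2) = (norm h ^ r)\<^sup>2"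
    unfolding W_def power2_abs sum_multinomial_power2_mono_pow by (simp flip: power_mult add: mult.commute)
  finally show ?thesis unfolding W_def S_def by (simp add: mult_ac)
qed

lemma line_deriv_0: "line_deriv f z (x - z) 0 1 = f x"
  unfolding line_deriv_def by (simp add: mi_eq_0 mi_fact_0 mono_pow_zero_index mpartial_0)

lemma sum_line_deriv_eq_taylor_poly:
  "(\<Sum>m\<le>r. line_deriv f z (x - z) m 0 / fact m) = taylor_poly f z r x"
proof -
  have "line_deriv f z (x - z) m 0 / fact m
      = (\<Sum>\<alpha>\<in>mi_eq m. (mpartial \<alpha> f z / real (mi_fact \<alpha>)) * mono_pow (x - z) \<alpha>)" for m
    unfolding line_deriv_def sum_divide_distrib by (rule sum.cong) auto
  thus ?thesis unfolding taylor_poly_def by (simp add: sum_mi_le_by_order)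
qed

lemma taylor_poly_remainder:
  fixes f :: "real ^ 'n::finite \<Rightarrow> real"
  assumes hc: "Crgamma_on r \<gamma> \<Omega> f" and g: "\<gamma> > 0" and op: "open \<Omega>" and seg: "closed_segment z x \<subseteq> \<Omega>"
  shows "\<bar>f x - taylor_poly f z r x\<bar> \<le> holder_norm r \<gamma> \<Omega> f * norm (x - z) powr (real r + \<gamma>)"
proof -
  have Cr: "Cr_on r \<Omega> f" using hc unfolding Crgamma_on_def by simp
  define h where "h = x - z"
  define G where "G = line_deriv f z h"
  define L where "L = norm h ^ r * norm h powr \<gamma>
    * sqrt (\<Sum>\<alpha>\<in>mi_eq r. (fact r / real (mi_fact \<alpha>)) * (holder_semi \<gamma> \<Omega> (mpartial \<alpha> f))\<^sup>2)"
  have mem: "z + t *\<^sub>R h \<in> \<Omega>" if "t \<in> {0..1}" for t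
    using closed_segment_param_mem[OF seg that] unfolding h_def .
  have der: "\<forall>j<r. \<forall>t\<in>{0..1}. (G j has_real_derivative G (Suc j) t) (at t)"
    unfolding G_def using line_deriv_has_derivative[OF Cr op _ mem] by blast
  have hol: "\<forall>t\<in>{0..1}. \<bar>G r t - G r 0\<bar> \<le> L * t powr \<gamma>"
    unfolding G_def L_def using line_deriv_holder[OF hc g mem] by blast
  have "\<bar>f x - taylor_poly f z r x\<bar> \<le> L / (\<Prod>i=1..r. \<gamma> + real i)"
    using taylor_holder_remainder_1d[OF der hol g]
    unfolding G_def h_def line_deriv_0 sum_line_deriv_eq_taylor_poly .
  also have "\<dots> = holder_norm r \<gamma> \<Omega> f * (norm h ^ r * norm h powr \<gamma>)"
    unfolding L_def holder_norm_def by simp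
  also have "norm h ^ r * norm h powr \<gamma> = norm h powr (real r + \<gamma>)"
    using g by (cases "h = 0") (simp_all add: powr_add powr_realpow)
  finally show ?thesis unfolding h_def .
qed

section \<open>Polynomials of bounded total degree\<close>

abbreviation poly_deg_le :: "nat \<Rightarrow> (real ^ 'n::finite \<Rightarrow> real) set" where
  "poly_deg_le d \<equiv> {P. \<exists>c. P = (\<lambda>x. \<Sum>\<alpha>\<in>mi_le d. c \<alpha> * mono_pow x \<alpha>)}"

lemma poly_space_Suc_eq: "poly_space (Suc d) = (poly_deg_le d :: (real ^ 'n::finite \<Rightarrow> real) set)"
proof -
  have "{\<alpha>::'n \<Rightarrow> nat. mi_abs \<alpha> < Suc d} = mi_le d" by (auto simp: mi_le_def)
  thus ?thesis unfolding poly_space_def mono_pow_def by simp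
qed

lemma poly_deg_leI: "P = (\<lambda>x. \<Sum>\<alpha>\<in>mi_le d. c \<alpha> * mono_pow x \<alpha>) \<Longrightarrow> P \<in> poly_deg_le d"
  by blast

lemma poly_deg_le_add: "P \<in> poly_deg_le d \<Longrightarrow> Q \<in> poly_deg_le d \<Longrightarrow> (\<lambda>x. P x + Q x) \<in> poly_deg_le d"
proof -
  assume "P \<in> poly_deg_le d" "Q \<in> poly_deg_le d"
  then obtain c c' where "P = (\<lambda>x. \<Sum>\<alpha>\<in>mi_le d. c \<alpha> * mono_pow x \<alpha>)" "Q = (\<lambda>x. \<Sum>\<alpha>\<in>mi_le d. c' \<alpha> * mono_pow x \<alpha>)" by blast
  hence "(\<lambda>x. P x + Q x) = (\<lambda>x. \<Sum>\<alpha>\<in>mi_le d. (c \<alpha> + c' \<alpha>) * mono_pow x \<alpha>)"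
    by (simp add: sum.distrib algebra_simps)
  thus ?thesis by (rule poly_deg_leI)
qed

lemma poly_deg_le_smult: "P \<in> poly_deg_le d \<Longrightarrow> (\<lambda>x. a * P x) \<in> poly_deg_le d"
proof -
  assume "P \<in> poly_deg_le d"
  then obtain c where "P = (\<lambda>x. \<Sum>\<alpha>\<in>mi_le d. c \<alpha> * mono_pow x \<alpha>)" by blast
  hence "(\<lambda>x. a * P x) = (\<lambda>x. \<Sum>\<alpha>\<in>mi_le d. (a * c \<alpha>) * mono_pow x \<alpha>)"
    by (simp add: sum_distrib_left mult_ac)
  thus ?thesis by (rule poly_deg_leI)
qed

lemma poly_deg_le_zero: "(\<lambda>x. 0) \<in> poly_deg_le d"
proof -
  have "(\<lambda>x::real^'n. 0::real) = (\<lambda>x. \<Sum>\<alpha>\<in>mi_le d. (\<lambda>_. 0) \<alpha> * mono_pow x \<alpha>)" by simp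
  thus ?thesis by (rule poly_deg_leI)
qed

lemma poly_deg_le_sum: "finite A \<Longrightarrow> (\<And>a. a \<in> A \<Longrightarrow> P a \<in> poly_deg_le d) \<Longrightarrow> (\<lambda>x. \<Sum>a\<in>A. P a x) \<in> poly_deg_le d"
proof (induction A rule: finite_induct)
  case empty thus ?case using poly_deg_le_zero by simp
next
  case (insert a A)
  have "(\<lambda>x. P a x + (\<Sum>a\<in>A. P a x)) \<in> poly_deg_le d"
    using insert by (intro poly_deg_le_add) auto
  thus ?case using insert by simp
qed

lemma poly_deg_le_mono: "d \<le> d' \<Longrightarrow> P \<in> poly_deg_le d \<Longrightarrow> P \<in> poly_deg_le d'"
proof -
  assume dd: "d \<le> d'" and "P \<in> poly_deg_le d"
  then obtain c where P: "P = (\<lambda>x. \<Sum>\<alpha>\<in>mi_le d. c \<alpha> * mono_pow x \<alpha>)" by blast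
  have sub: "mi_le d \<subseteq> mi_le d'" using dd by (auto simp: mi_le_def)
  have "P = (\<lambda>x. \<Sum>\<alpha>\<in>mi_le d'. (if \<alpha> \<in> mi_le d then c \<alpha> else 0) * mono_pow x \<alpha>)"
  proof (rule ext)
    fix x
    have "(\<Sum>\<alpha>\<in>mi_le d'. (if \<alpha> \<in> mi_le d then c \<alpha> else 0) * mono_pow x \<alpha>)
        = (\<Sum>\<alpha>\<in>mi_le d'. (if \<alpha> \<in> mi_le d then c \<alpha> * mono_pow x \<alpha> else 0))"
      by (intro sum.cong) auto
    also have "\<dots> = (\<Sum>\<alpha>\<in>mi_le d' \<inter> mi_le d. c \<alpha> * mono_pow x \<alpha>)"
      by (rule sum.inter_restrict[symmetric]) (rule finite_mi_le)
    also have "mi_le d' \<inter> mi_le d = mi_le d" using sub by blast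
    finally show "P x = (\<Sum>\<alpha>\<in>mi_le d'. (if \<alpha> \<in> mi_le d then c \<alpha> else 0) * mono_pow x \<alpha>)"
      unfolding P by simp
  qed
  thus ?thesis by (rule poly_deg_leI)
qed

lemma poly_deg_le_coord_mult: "P \<in> poly_deg_le d \<Longrightarrow> (\<lambda>x. x $ i * P x) \<in> poly_deg_le (Suc d)"
proof -
  assume "P \<in> poly_deg_le d"
  then obtain c where P: "P = (\<lambda>x. \<Sum>\<alpha>\<in>mi_le d. c \<alpha> * mono_pow x \<alpha>)" by blast
  define c' where "c' \<beta> = (\<Sum>\<alpha>\<in>{\<alpha>\<in>mi_le d. mi_inc \<alpha> i = \<beta>}. c \<alpha>)" for \<beta>
  have "(\<lambda>x. x $ i * P x) = (\<lambda>x. \<Sum>\<beta>\<in>mi_le (Suc d). c' \<beta> * mono_pow x \<beta>)"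
  proof (rule ext)
    fix x
    have "x $ i * P x = (\<Sum>\<alpha>\<in>mi_le d. c \<alpha> * mono_pow x (mi_inc \<alpha> i))"
      unfolding P by (simp add: sum_distrib_left mono_pow_mi_inc mult_ac)
    also have "\<dots> = (\<Sum>\<beta>\<in>mi_le (Suc d). \<Sum>\<alpha>\<in>{\<alpha>\<in>mi_le d. mi_inc \<alpha> i = \<beta>}. c \<alpha> * mono_pow x (mi_inc \<alpha> i))"
      by (rule sum.group[symmetric]) (auto simp: finite_mi_le[unfolded mi_le_def] mi_le_def mi_abs_mi_inc)
    also have "\<dots> = (\<Sum>\<beta>\<in>mi_le (Suc d). c' \<beta> * mono_pow x \<beta>)"
      unfolding c'_def sum_distrib_right by (intro sum.cong refl) auto
    finally show "x $ i * P x = (\<Sum>\<beta>\<in>mi_le (Suc d). c' \<beta> * mono_pow x \<beta>)" .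
  qed
  thus ?thesis by (rule poly_deg_leI)
qed

lemma poly_deg_le_lin_mult: "P \<in> poly_deg_le d \<Longrightarrow> (\<lambda>x. (x $ i - a) * P x) \<in> poly_deg_le (Suc d)"
proof -
  assume P: "P \<in> poly_deg_le d"
  have "(\<lambda>x. x $ i * P x + (- a) * P x) \<in> poly_deg_le (Suc d)"
    using P by (intro poly_deg_le_add poly_deg_le_coord_mult poly_deg_le_mono[of d "Suc d"] poly_deg_le_smult) auto
  thus ?thesis by (simp add: algebra_simps)
qed

lemma poly_deg_le_one: "(\<lambda>x::real ^ 'n::finite. 1) \<in> poly_deg_le 0"
proof -
  have "mi_le 0 = (mi_eq 0 :: ('n \<Rightarrow> nat) set)" by (auto simp: mi_le_def mi_eq_def)
  hence "(\<lambda>x::real^'n. 1::real) = (\<lambda>x. \<Sum>\<alpha>\<in>mi_le 0. (\<lambda>_. 1) \<alpha> * mono_pow x \<alpha>)"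
    by (simp add: mi_eq_0 mono_pow_zero_index)
  thus ?thesis by (rule poly_deg_leI)
qed

lemma poly_deg_le_pow_mult: "Q \<in> poly_deg_le d \<Longrightarrow> (\<lambda>x. (x $ i - a) ^ n * Q x) \<in> poly_deg_le (n + d)"
proof (induction n)
  case 0 thus ?case by simp
next
  case (Suc n)
  have "(\<lambda>x. (x $ i - a) * ((x $ i - a) ^ n * Q x)) \<in> poly_deg_le (Suc (n + d))"
    using Suc by (intro poly_deg_le_lin_mult) auto
  thus ?case by (simp add: mult_ac)
qed

lemma poly_deg_le_prod: "finite S \<Longrightarrow> (\<lambda>x. \<Prod>i\<in>S. (x $ i - z $ i) ^ \<alpha> i) \<in> poly_deg_le (\<Sum>i\<in>S. \<alpha> i)"
proof (induction S rule: finite_induct)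
  case empty thus ?case using poly_deg_le_one by simp
next
  case (insert i S)
  have "(\<lambda>x. (x $ i - z $ i) ^ \<alpha> i * (\<Prod>i\<in>S. (x $ i - z $ i) ^ \<alpha> i)) \<in> poly_deg_le (\<alpha> i + (\<Sum>i\<in>S. \<alpha> i))"
    using insert by (intro poly_deg_le_pow_mult) auto
  thus ?case using insert by simp
qed

lemma mono_pow_shift_poly_deg_le: "(\<lambda>x. mono_pow (x - z) \<alpha>) \<in> poly_deg_le (mi_abs (\<alpha> :: 'n::finite \<Rightarrow> nat))"
  using poly_deg_le_prod[of UNIV z \<alpha>] unfolding mono_pow_def mi_abs_def by simp

lemma taylor_poly_in_poly_space:
  fixes f :: "real ^ 'n::finite \<Rightarrow> real"
  assumes "r < q"
  shows "taylor_poly f z r \<in> poly_space q"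
proof -
  have "taylor_poly f z r \<in> poly_deg_le (q - 1)"
    unfolding taylor_poly_def[abs_def] using assms
    by (intro poly_deg_le_sum poly_deg_le_smult poly_deg_le_mono[OF _ mono_pow_shift_poly_deg_le])
      (auto simp: finite_mi_le[unfolded mi_le_def] mi_le_def)
  moreover have "poly_space q = (poly_deg_le (q - 1) :: (real ^ 'n \<Rightarrow> real) set)"
    using poly_space_Suc_eq[of "q - 1"] assms by simp
  ultimately show ?thesis by blast
qed

section \<open>Derivatives of the Taylor polynomial at its centre\<close>

definition shifted_poly :: "'a set \<Rightarrow> ('a \<Rightarrow> real) \<Rightarrow> ('a \<Rightarrow> ('n::finite \<Rightarrow> nat)) \<Rightarrow> real ^ 'n \<Rightarrow> real ^ 'n \<Rightarrow> real" where
  "shifted_poly A c e z = (\<lambda>x. \<Sum>a\<in>A. c a * mono_pow (x - z) (e a))"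

definition falling_fact :: "nat \<Rightarrow> nat \<Rightarrow> real" where
  "falling_fact k n = (\<Prod>l<n. real (k - l))"

lemma mono_pow_remove: "mono_pow v \<alpha> = (v $ i) ^ \<alpha> i * (\<Prod>j\<in>UNIV-{i}. (v $ j) ^ \<alpha> j)"
  unfolding mono_pow_def by (rule prod.remove) auto

lemma mono_pow_line_has_derivative:
  fixes x z :: "real ^ 'n::finite"
  shows "((\<lambda>t. mono_pow (x + t *\<^sub>R axis i 1 - z) \<alpha>) has_real_derivative
      real (\<alpha> i) * mono_pow (x - z) (\<alpha>(i := \<alpha> i - 1))) (at 0)"
proof -
  define R where "R = (\<Prod>j\<in>UNIV-{i}. ((x - z) $ j) ^ \<alpha> j)"
  have eq1: "mono_pow (x + t *\<^sub>R axis i 1 - z) \<alpha> = (x $ i - z $ i + t) ^ \<alpha> i * R" for t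
  proof -
    have "(\<Prod>j\<in>UNIV-{i}. ((x + t *\<^sub>R axis i 1 - z) $ j) ^ \<alpha> j) = R"
      unfolding R_def by (intro prod.cong) (auto simp: axis_def)
    thus ?thesis by (subst mono_pow_remove[of _ _ i]) (simp add: algebra_simps)
  qed
  have eq2: "mono_pow (x - z) (\<alpha>(i := \<alpha> i - 1)) = (x $ i - z $ i) ^ (\<alpha> i - 1) * R"
  proof -
    have "(\<Prod>j\<in>UNIV-{i}. ((x - z) $ j) ^ (\<alpha>(i := \<alpha> i - 1)) j) = R"
      unfolding R_def by (intro prod.cong) auto
    thus ?thesis by (subst mono_pow_remove[of _ _ i]) simp
  qed
  have "((\<lambda>t. (x $ i - z $ i + t) ^ \<alpha> i * R) has_real_derivative
      (real (\<alpha> i) * (1 * (x $ i - z $ i + 0) ^ (\<alpha> i - Suc 0))) * R) (at 0)"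
  proof -
    have d1: "((\<lambda>t. x $ i - z $ i + t) has_real_derivative 1) (at 0)"
      using DERIV_add[OF DERIV_const DERIV_ident] by simp
    show ?thesis by (rule DERIV_cmult_right[OF DERIV_power[OF d1]])
  qed
  thus ?thesis unfolding eq1 eq2 by (simp add: mult_ac)
qed

lemma partial_shifted_poly:
  assumes "finite A"
  shows "partial i (shifted_poly A c e z) = shifted_poly A (\<lambda>a. c a * real (e a i)) (\<lambda>a. (e a)(i := e a i - 1)) z"
proof (rule ext)
  fix x
  have "((\<lambda>t. shifted_poly A c e z (x + t *\<^sub>R axis i 1)) has_real_derivative
      (\<Sum>a\<in>A. c a * (real (e a i) * mono_pow (x - z) ((e a)(i := e a i - 1))))) (at 0)"
    unfolding shifted_poly_def by (intro DERIV_sum DERIV_cmult mono_pow_line_has_derivative)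
  thus "partial i (shifted_poly A c e z) x = shifted_poly A (\<lambda>a. c a * real (e a i)) (\<lambda>a. (e a)(i := e a i - 1)) z x"
    unfolding partial_def shifted_poly_def by (simp add: DERIV_imp_deriv mult_ac)
qed

lemma funpow_partial_shifted_poly:
  assumes "finite A"
  shows "(partial i ^^ n) (shifted_poly A c e z) = shifted_poly A (\<lambda>a. c a * falling_fact (e a i) n) (\<lambda>a. (e a)(i := e a i - n)) z"
proof (induction n)
  case 0
  have "(\<lambda>a. (e a)(i := e a i)) = e" by auto
  thus ?case by (simp add: falling_fact_def)
next
  case (Suc n)
  have "(partial i ^^ Suc n) (shifted_poly A c e z) = partial i (shifted_poly A (\<lambda>a. c a * falling_fact (e a i) n) (\<lambda>a. (e a)(i := e a i - n)) z)"
    by (simp only: funpow.simps(2) comp_apply Suc.IH)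
  also have "\<dots> = shifted_poly A (\<lambda>a. c a * falling_fact (e a i) n * real (e a i - n)) (\<lambda>a. (e a)(i := e a i - n - 1)) z"
    by (simp add: partial_shifted_poly[OF assms])
  also have "(\<lambda>a. c a * falling_fact (e a i) n * real (e a i - n)) = (\<lambda>a. c a * falling_fact (e a i) (Suc n))"
    by (simp add: falling_fact_def mult_ac)
  also have "(\<lambda>a. (e a)(i := e a i - n - 1)) = (\<lambda>a. (e a)(i := e a i - Suc n))"
    by simp
  finally show ?case .
qed

lemma foldr_partial_shifted_poly:
  assumes "finite A" "distinct l"
  shows "foldr (\<lambda>i g. (partial i ^^ \<beta> i) g) l (shifted_poly A c e z)
    = shifted_poly A (\<lambda>a. c a * (\<Prod>i\<in>set l. falling_fact (e a i) (\<beta> i))) (\<lambda>a j. if j \<in> set l then e a j - \<beta> j else e a j) z"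
  using assms(2)
proof (induction l)
  case Nil thus ?case by simp
next
  case (Cons i l)
  have il: "i \<notin> set l" "distinct l" using Cons.prems by auto
  have "foldr (\<lambda>i g. (partial i ^^ \<beta> i) g) (i # l) (shifted_poly A c e z)
     = (partial i ^^ \<beta> i) (shifted_poly A (\<lambda>a. c a * (\<Prod>i\<in>set l. falling_fact (e a i) (\<beta> i))) (\<lambda>a j. if j \<in> set l then e a j - \<beta> j else e a j) z)"
    using Cons.IH il by simp
  also have "\<dots> = shifted_poly A (\<lambda>a. c a * (\<Prod>i\<in>set l. falling_fact (e a i) (\<beta> i)) * falling_fact (e a i) (\<beta> i))
      (\<lambda>a. (\<lambda>j. if j \<in> set l then e a j - \<beta> j else e a j)(i := e a i - \<beta> i)) z"
    using il by (simp add: funpow_partial_shifted_poly[OF assms(1)])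
  also have "(\<lambda>a. c a * (\<Prod>i\<in>set l. falling_fact (e a i) (\<beta> i)) * falling_fact (e a i) (\<beta> i))
      = (\<lambda>a. c a * (\<Prod>i\<in>set (i # l). falling_fact (e a i) (\<beta> i)))"
    using il by (simp add: mult_ac)
  also have "(\<lambda>a. (\<lambda>j. if j \<in> set l then e a j - \<beta> j else e a j)(i := e a i - \<beta> i))
      = (\<lambda>a j. if j \<in> set (i # l) then e a j - \<beta> j else e a j)"
    by (auto simp: fun_eq_iff)
  finally show ?case .
qed

lemma mpartial_shifted_poly:
  fixes e :: "'a \<Rightarrow> ('n::finite \<Rightarrow> nat)"
  assumes "finite A"
  shows "mpartial \<beta> (shifted_poly A c e z) = shifted_poly A (\<lambda>a. c a * (\<Prod>i\<in>UNIV. falling_fact (e a i) (\<beta> i))) (\<lambda>a j. e a j - \<beta> j) z"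
proof -
  have cl: "set (coord_list :: 'n list) = UNIV" by (rule coord_list_distinct_UNIV[THEN conjunct2])
  show ?thesis
    unfolding mpartial_def foldr_partial_shifted_poly[OF assms coord_list_distinct_UNIV[THEN conjunct1], of \<beta> c e z] cl by simp
qed

lemma mono_pow_zero_base: "mono_pow 0 \<gamma> = (if \<gamma> = (\<lambda>_. 0) then 1 else 0)"
proof (cases "\<gamma> = (\<lambda>_. 0)")
  case True thus ?thesis by (simp add: mono_pow_zero_index)
next
  case False
  then obtain i where "\<gamma> i \<noteq> 0" by auto
  hence "(0 $ i :: real) ^ \<gamma> i = 0" by simp
  hence "mono_pow 0 \<gamma> = 0" unfolding mono_pow_def by (intro prod_zero) auto
  thus ?thesis using False by simp
qed

lemma falling_fact_self: "falling_fact k k = fact k"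
proof -
  have "falling_fact k k = real (\<Prod>l<k. k - l)" unfolding falling_fact_def by simp
  also have "\<dots> = fact k" by (simp add: fact_prod_rev atLeast0LessThan)
  finally show ?thesis .
qed

lemma falling_fact_eq_0: "k < n \<Longrightarrow> falling_fact k n = 0"
  unfolding falling_fact_def by (intro prod_zero) (auto intro: bexI[of _ k])

lemma taylor_poly_eq_shifted_poly: "taylor_poly f z r = shifted_poly (mi_le r) (\<lambda>\<alpha>. mpartial \<alpha> f z / real (mi_fact \<alpha>)) id z"
  unfolding taylor_poly_def[abs_def] shifted_poly_def by simp

lemma falling_fact_mono_pow_zero_base:
  fixes \<alpha> \<beta> :: "'n::finite \<Rightarrow> nat"
  shows "(\<Prod>i\<in>UNIV. falling_fact (\<alpha> i) (\<beta> i)) * mono_pow 0 (\<lambda>j. \<alpha> j - \<beta> j)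
    = (if \<alpha> = \<beta> then real (mi_fact \<beta>) else 0)"
proof (cases "\<alpha> = \<beta>")
  case True
  thus ?thesis by (simp add: falling_fact_self mi_fact_def mono_pow_zero_base)
next
  case False
  then obtain j where "\<alpha> j \<noteq> \<beta> j" by auto
  show ?thesis
  proof (cases "\<alpha> j < \<beta> j")
    case True
    hence "(\<Prod>i\<in>UNIV. falling_fact (\<alpha> i) (\<beta> i)) = 0" by (intro prod_zero) (auto intro: falling_fact_eq_0)
    thus ?thesis using False by simp
  next
    case False
    hence "(\<lambda>j. \<alpha> j - \<beta> j) \<noteq> (\<lambda>_. 0)" using \<open>\<alpha> j \<noteq> \<beta> j\<close> by (auto simp: fun_eq_iff intro!: exI[of _ j])
    thus ?thesis using \<open>\<alpha> j \<noteq> \<beta> j\<close> by (auto simp: mono_pow_zero_base)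
  qed
qed

lemma mpartial_taylor_poly_center:
  fixes f :: "real ^ 'n::finite \<Rightarrow> real"
  assumes "\<beta> \<in> mi_le r"
  shows "mpartial \<beta> (taylor_poly f z r) z = mpartial \<beta> f z"
proof -
  define c where "c \<alpha> = mpartial \<alpha> f z / real (mi_fact \<alpha>)" for \<alpha> :: "'n \<Rightarrow> nat"
  have "mpartial \<beta> (taylor_poly f z r) z
      = (\<Sum>\<alpha>\<in>mi_le r. c \<alpha> * ((\<Prod>i\<in>UNIV. falling_fact (\<alpha> i) (\<beta> i)) * mono_pow 0 (\<lambda>j. \<alpha> j - \<beta> j)))"
    unfolding taylor_poly_eq_shifted_poly mpartial_shifted_poly[OF finite_mi_le]
    unfolding shifted_poly_def c_def by (simp add: mult_ac)
  also have "\<dots> = (\<Sum>\<alpha>\<in>mi_le r. if \<alpha> = \<beta> then c \<beta> * real (mi_fact \<beta>) else 0)"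
    unfolding falling_fact_mono_pow_zero_base by (intro sum.cong) auto
  also have "\<dots> = mpartial \<beta> f z" using assms mi_fact_pos[of \<beta>] by (simp add: finite_mi_le c_def)
  finally show ?thesis .
qed

section \<open>The error of a minimal formula\<close>

lemma powr_eq_mu_pow_mult:
  assumes "d > 0"
  shows "d powr a = mu_pow \<mu> d * d powr (a - \<mu>)"
  using assms unfolding mu_pow_def by (simp add: powr_add[symmetric])

lemma mu_pow_nonneg: "mu_pow \<mu> d \<ge> 0"
  unfolding mu_pow_def by simp

lemma sum_weights_powr_le_h:
  fixes X :: "(real ^ 'n::finite) set"
  assumes finX: "finite X" and ne: "support_pts X w \<noteq> {}" and a: "a > 0" and \<mu>a: "\<mu> \<le> a"
  shows "(\<Sum>x\<in>X. \<bar>w x\<bar> * norm (x - z) powr a) \<le> wnorm_1mu \<mu> z X w * h_zY z (support_pts X w) powr (a - \<mu>)"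
proof -
  let ?h = "h_zY z (support_pts X w)"
  have fin: "finite (support_pts X w)" using finX unfolding support_pts_def by simp
  have "\<bar>w x\<bar> * norm (x - z) powr a \<le> \<bar>w x\<bar> * mu_pow \<mu> (norm (x - z)) * ?h powr (a - \<mu>)" if x: "x \<in> X" for x
  proof (cases "w x = 0")
    case True thus ?thesis by simp
  next
    case False
    hence xs: "x \<in> support_pts X w" using x unfolding support_pts_def by simp
    have dh: "norm (x - z) \<le> ?h" unfolding h_zY_def using fin xs by (intro Max_ge) auto
    show ?thesis
    proof (cases "x = z")
      case True thus ?thesis using a by (simp add: mu_pow_nonneg)
    next
      case False
      hence d: "norm (x - z) > 0" by simp
      have "norm (x - z) powr a = mu_pow \<mu> (norm (x - z)) * norm (x - z) powr (a - \<mu>)"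
        by (rule powr_eq_mu_pow_mult[OF d])
      also have "\<dots> \<le> mu_pow \<mu> (norm (x - z)) * ?h powr (a - \<mu>)"
        using \<mu>a d dh by (intro mult_left_mono powr_mono2 mu_pow_nonneg) auto
      finally show ?thesis by (simp add: mult_left_mono mult.assoc)
    qed
  qed
  hence "(\<Sum>x\<in>X. \<bar>w x\<bar> * norm (x - z) powr a) \<le> (\<Sum>x\<in>X. \<bar>w x\<bar> * mu_pow \<mu> (norm (x - z)) * ?h powr (a - \<mu>))"
    by (rule sum_mono)
  also have "\<dots> = wnorm_1mu \<mu> z X w * ?h powr (a - \<mu>)"
    unfolding wnorm_1mu_def by (simp add: sum_distrib_right)
  finally show ?thesis .
qed

lemma sum_weights_powr_le_s:
  fixes X :: "(real ^ 'n::finite) set"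
  assumes finX: "finite X" and ne: "support_pts X w - {z} \<noteq> {}" and a: "a > 0" and \<mu>a: "\<mu> > a"
  shows "(\<Sum>x\<in>X. \<bar>w x\<bar> * norm (x - z) powr a) \<le> wnorm_1mu \<mu> z X w * s_zY z (support_pts X w) powr (a - \<mu>)"
proof -
  let ?s = "s_zY z (support_pts X w)"
  have fin: "finite (support_pts X w - {z})" using finX unfolding support_pts_def by simp
  have spos: "?s > 0" unfolding s_zY_def using fin ne by (subst Min_gr_iff) auto
  have "\<bar>w x\<bar> * norm (x - z) powr a \<le> \<bar>w x\<bar> * mu_pow \<mu> (norm (x - z)) * ?s powr (a - \<mu>)" if x: "x \<in> X" for x
  proof (cases "w x = 0")
    case True thus ?thesis by simp
  next
    case False
    show ?thesis
    proof (cases "x = z")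
      case True thus ?thesis using a by (simp add: mu_pow_nonneg)
    next
      case xz: False
      hence xs: "x \<in> support_pts X w - {z}" using x False unfolding support_pts_def by simp
      have ds: "?s \<le> norm (x - z)" unfolding s_zY_def using fin xs by (intro Min_le) auto
      have d: "norm (x - z) > 0" using xz by simp
      have "norm (x - z) powr a = mu_pow \<mu> (norm (x - z)) * norm (x - z) powr (a - \<mu>)"
        by (rule powr_eq_mu_pow_mult[OF d])
      also have "\<dots> \<le> mu_pow \<mu> (norm (x - z)) * ?s powr (a - \<mu>)"
        using \<mu>a spos ds by (intro mult_left_mono powr_mono2' mu_pow_nonneg) auto
      finally show ?thesis by (simp add: mult_left_mono mult.assoc)
    qed
  qed
  hence "(\<Sum>x\<in>X. \<bar>w x\<bar> * norm (x - z) powr a) \<le> (\<Sum>x\<in>X. \<bar>w x\<bar> * mu_pow \<mu> (norm (x - z)) * ?s powr (a - \<mu>))"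
    by (rule sum_mono)
  also have "\<dots> = wnorm_1mu \<mu> z X w * ?s powr (a - \<mu>)"
    unfolding wnorm_1mu_def by (simp add: sum_distrib_right)
  finally show ?thesis .
qed

lemma rho_eq_wnorm_minimal:
  assumes "minimal_formula k c z X q \<mu> w"
  shows "rho k c z X q \<mu> = wnorm_1mu \<mu> z X w"
  unfolding rho_def using assms unfolding minimal_formula_def by (intro cInf_eq_minimum) auto

lemma holder_norm_nonneg:
  assumes "\<gamma> > 0"
  shows "holder_norm r \<gamma> \<Omega> f \<ge> 0"
proof -
  have "(\<Prod>i=1..r. \<gamma> + real i) > 0" using assms by (intro prod_pos) auto
  thus ?thesis unfolding holder_norm_def
    by (intro mult_nonneg_nonneg real_sqrt_ge_zero sum_nonneg) auto
qed

lemma exact_formula_error_le: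
  assumes exact: "exact_formula k c z X q w"
    and op: "open \<Omega>" and SOm: "star_S z X \<subseteq> \<Omega>"
    and kr: "k \<le> r" and rq: "r < q" and g: "0 < \<gamma>" and hc: "Crgamma_on r \<gamma> \<Omega> f"
  shows "\<bar>diff_op_at k c f z - (\<Sum>x\<in>X. w x * f x)\<bar>
     \<le> holder_norm r \<gamma> \<Omega> f * (\<Sum>x\<in>X. \<bar>w x\<bar> * norm (x - z) powr (real r + \<gamma>))"
proof -
  define p where "p = taylor_poly f z r"
  have pq: "p \<in> poly_space q" unfolding p_def by (rule taylor_poly_in_poly_space[OF rq])
  have ex: "diff_op_at k c p z = (\<Sum>x\<in>X. w x * p x)"
    using exact pq unfolding exact_formula_def by blast
  have Deq: "diff_op_at k c f z = diff_op_at k c p z"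
    unfolding diff_op_at_def p_def
    by (intro sum.cong refl) (use kr in \<open>auto simp: mpartial_taylor_poly_center mi_le_def\<close>)
  have "diff_op_at k c f z - (\<Sum>x\<in>X. w x * f x) = (\<Sum>x\<in>X. w x * (p x - f x))"
    unfolding Deq ex by (simp add: sum_subtractf algebra_simps)
  also have "\<bar>\<dots>\<bar> \<le> (\<Sum>x\<in>X. \<bar>w x\<bar> * (holder_norm r \<gamma> \<Omega> f * norm (x - z) powr (real r + \<gamma>)))"
  proof (rule order_trans[OF sum_abs], rule sum_mono)
    fix x assume x: "x \<in> X"
    have seg: "closed_segment z x \<subseteq> \<Omega>" using SOm x unfolding star_S_def by auto
    have "\<bar>f x - p x\<bar> \<le> holder_norm r \<gamma> \<Omega> f * norm (x - z) powr (real r + \<gamma>)"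
      unfolding p_def by (rule taylor_poly_remainder[OF hc g op seg])
    thus "\<bar>w x * (p x - f x)\<bar> \<le> \<bar>w x\<bar> * (holder_norm r \<gamma> \<Omega> f * norm (x - z) powr (real r + \<gamma>))"
      by (simp add: abs_mult mult_left_mono abs_minus_commute)
  qed
  also have "\<dots> = holder_norm r \<gamma> \<Omega> f * (\<Sum>x\<in>X. \<bar>w x\<bar> * norm (x - z) powr (real r + \<gamma>))"
    by (simp add: sum_distrib_left mult_ac)
  finally show ?thesis .
qed

lemma formula_error_le_h:
  assumes finX: "finite X" and minw: "minimal_formula k c z X q \<mu> w"
    and ne: "support_pts X w \<noteq> {}" and op: "open \<Omega>" and SOm: "star_S z X \<subseteq> \<Omega>"
    and kr: "k \<le> r" and rq: "r < q" and g: "0 < \<gamma>" and hc: "Crgamma_on r \<gamma> \<Omega> f"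
    and \<mu>: "\<mu> \<le> r + \<gamma>"
  shows "\<bar>diff_op_at k c f z - (\<Sum>x\<in>X. w x * f x)\<bar>
    \<le> rho k c z X q \<mu> * h_zY z (support_pts X w) powr (r + \<gamma> - \<mu>) * holder_norm r \<gamma> \<Omega> f"
proof -
  have exact: "exact_formula k c z X q w" using minw unfolding minimal_formula_def by blast
  have "\<bar>diff_op_at k c f z - (\<Sum>x\<in>X. w x * f x)\<bar>
      \<le> holder_norm r \<gamma> \<Omega> f * (\<Sum>x\<in>X. \<bar>w x\<bar> * norm (x - z) powr (real r + \<gamma>))"
    by (rule exact_formula_error_le[OF exact op SOm kr rq g hc])
  also have "\<dots> \<le> holder_norm r \<gamma> \<Omega> f * (wnorm_1mu \<mu> z X w * h_zY z (support_pts X w) powr (real r + \<gamma> - \<mu>))"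
    using g \<mu> by (intro mult_left_mono holder_norm_nonneg sum_weights_powr_le_h[OF finX ne]) auto
  finally show ?thesis unfolding rho_eq_wnorm_minimal[OF minw] by (simp add: mult_ac)
qed

lemma formula_error_le_s:
  assumes finX: "finite X" and minw: "minimal_formula k c z X q \<mu> w"
    and supp: "support_pts X w - {z} \<noteq> {}" and op: "open \<Omega>" and SOm: "star_S z X \<subseteq> \<Omega>"
    and kr: "k \<le> r" and rq: "r < q" and g: "0 < \<gamma>" and hc: "Crgamma_on r \<gamma> \<Omega> f"
    and \<mu>: "\<mu> > r + \<gamma>"
  shows "\<bar>diff_op_at k c f z - (\<Sum>x\<in>X. w x * f x)\<bar>
    \<le> rho k c z X q \<mu> * s_zY z (support_pts X w) powr (r + \<gamma> - \<mu>) * holder_norm r \<gamma> \<Omega> f"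
proof -
  have exact: "exact_formula k c z X q w" using minw unfolding minimal_formula_def by blast
  have "\<bar>diff_op_at k c f z - (\<Sum>x\<in>X. w x * f x)\<bar>
      \<le> holder_norm r \<gamma> \<Omega> f * (\<Sum>x\<in>X. \<bar>w x\<bar> * norm (x - z) powr (real r + \<gamma>))"
    by (rule exact_formula_error_le[OF exact op SOm kr rq g hc])
  also have "\<dots> \<le> holder_norm r \<gamma> \<Omega> f * (wnorm_1mu \<mu> z X w * s_zY z (support_pts X w) powr (real r + \<gamma> - \<mu>))"
    using g \<mu> by (intro mult_left_mono holder_norm_nonneg sum_weights_powr_le_s[OF finX supp]) auto
  finally show ?thesis unfolding rho_eq_wnorm_minimal[OF minw] by (simp add: mult_ac)
qed

lemma h_zY_pos:
  assumes "finite Y" "Y - {z} \<noteq> {}"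
  shows "h_zY z Y > 0"
proof -
  obtain y where y: "y \<in> Y" "y \<noteq> z" using assms(2) by auto
  have "0 < norm (y - z)" using y by simp
  also have "\<dots> \<le> h_zY z Y" unfolding h_zY_def using assms(1) y by (intro Max_ge) auto
  finally show ?thesis .
qed

text \<open>A support point other than \<open>z\<close> makes \<open>h > 0\<close>; this matters because \<open>0 powr 0 = 0\<close>.\<close>

lemma formula_error_le_rho:
  assumes finX: "finite X" and minw: "minimal_formula k c z X q (r + \<gamma>) w"
    and supp: "support_pts X w - {z} \<noteq> {}" and op: "open \<Omega>" and SOm: "star_S z X \<subseteq> \<Omega>"
    and kr: "k \<le> r" and rq: "r < q" and g: "0 < \<gamma>" and hc: "Crgamma_on r \<gamma> \<Omega> f"
  shows "\<bar>diff_op_at k c f z - (\<Sum>x\<in>X. w x * f x)\<bar> \<le> rho k c z X q (r + \<gamma>) * holder_norm r \<gamma> \<Omega> f"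
proof -
  have "h_zY z (support_pts X w) > 0"
    using finX supp by (intro h_zY_pos) (auto simp: support_pts_def)
  moreover have "support_pts X w \<noteq> {}" using supp by auto
  ultimately show ?thesis
    using formula_error_le_h[OF finX minw _ op SOm kr rq g hc] by simp
qed

theorem mainTheorem11:
  fixes k q :: nat and c :: "('n::finite \<Rightarrow> nat) \<Rightarrow> real"
    and z :: "real ^ 'n" and X \<Omega> :: "(real ^ 'n) set"
    and \<mu> :: real and w :: "real ^ 'n \<Rightarrow> real"
  assumes ord: "diff_op_order k c"
    and finX: "finite X"
    and mu: "\<mu> \<ge> 0"
    and qk: "q > k"
    and minw: "minimal_formula k c z X q \<mu> w"
    and supp: "support_pts X w - {z} \<noteq> {}"
    and dom: "open \<Omega>" "connected \<Omega>"
    and SOm: "star_S z X \<subseteq> \<Omega>"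
  shows "\<forall>(r::nat) (\<gamma>::real) f. k \<le> r \<and> r \<le> q - 1 \<and> 0 < \<gamma> \<and> \<gamma> \<le> 1 \<and> Crgamma_on r \<gamma> \<Omega> f \<longrightarrow>
     (\<mu> \<le> r + \<gamma> \<longrightarrow>
        \<bar>diff_op_at k c f z - (\<Sum>x\<in>X. w x * f x)\<bar>
          \<le> rho k c z X q \<mu> * h_zY z (support_pts X w) powr (r + \<gamma> - \<mu>) * holder_norm r \<gamma> \<Omega> f) \<and>
     (\<mu> > r + \<gamma> \<longrightarrow>
        \<bar>diff_op_at k c f z - (\<Sum>x\<in>X. w x * f x)\<bar>
          \<le> rho k c z X q \<mu> * s_zY z (support_pts X w) powr (r + \<gamma> - \<mu>) * holder_norm r \<gamma> \<Omega> f) \<and>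
     (\<mu> = r + \<gamma> \<longrightarrow> \<bar>diff_op_at k c f z - (\<Sum>x\<in>X. w x * f x)\<bar>
          \<le> rho k c z X q (r + \<gamma>) * holder_norm r \<gamma> \<Omega> f)"
proof -
  have ne: "support_pts X w \<noteq> {}" using supp by auto
  have "r < q" if "r \<le> q - 1" for r using that qk by linarith
  thus ?thesis
    using formula_error_le_h[OF finX minw ne dom(1) SOm]
      formula_error_le_s[OF finX minw supp dom(1) SOm]
      formula_error_le_rho[OF finX _ supp dom(1) SOm] minw
    by blast
qed

end
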